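(* Let $n\ge 2$. For any two locally valid MV assignments $\mu_1,\mu_2$ of $M_{2,n}$ there exist proper $3$-colorings $\gamma,\beta$ of $M^*_{2,n}$ corresponding to $\mu_1,\mu_2$ respectively such that $$\min_{H\in 2\mathbb{Z}}\ \frac12\sum_{v\in V(M^*_{2,n})}\bigl|H+h_{\gamma,v_{1,1}}(\beta,v)\bigr|\le\left\lceil \frac{n^2}{2}\right\rceil .$$ Consequently the distance between $\mu_1$ and $\mu_2$ in ${\rm OFG}(M_{2,n})$ is at most $\lceil n^2/2\rceil$, the distance between two opposite vertices of degree $2$; that is, a pair of vertices at maximal distance is formed by two opposite degree-$2$ vertices.
   Context: The $2\times n$ Miura-ori $M_{2,n}$ has faces $\alpha_{i,j}$ ($i\in\{1,2\}$, $j\in\{1,\dots,n\}$), interior vertices $x_1,\dots,x_{n-1}$, creases $e_0$ and $e_{3k-1},e_{3k},e_{3k+1}$ ($k=1,\dots,n-1$); at $x_k$ the creases are left $e_{3k-3}$, top $e_{3k-1}$, right $e_{3k}$, bottom $e_{3k+1}$. Face $\alpha_{1,j}$ is bordered by those of $e_{3j-4}$ (iff $j\ge2$), $e_{3j-3}$, $e_{3j-1}$ (iff $j\le n-1$); $\alpha_{2,j}$ by those of $e_{3j-2}$ (iff $j\ge2$), $e_{3j-3}$, $e_{3j+1}$ (iff $j\le n-1$). An MV assignment $\mu$ maps creases to $\{1,-1\}$; it is locally valid if for each $k$ exactly one of $\mu(e_{3k-1}),\mu(e_{3k}),\mu(e_{3k+1})$ differs from $\mu(e_{3k-3})$. The face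 flip $\mu_\alpha$ negates $\mu$ on the creases bordering $\alpha$; $\alpha$ is flippable if $\mu,\mu_\alpha$ are both locally valid. ${\rm OFG}(M_{2,n})$ has the locally valid assignments as vertices, $\mu\sim\mu_\alpha$ for flippable $\alpha$. Opposite assignments: same flippable faces and opposite parity on every crease (i.e., $\mu$ and $-\mu$). $M^*_{2,n}$ is the grid graph on $v_{i,j}$ ($i\in\{1,2\}$, $1\le j\le n$), $v_{i,j}$ adjacent to $v_{i,j\pm1}$, $v_{3-i,j}$; colors in $\mathbb{Z}_3$. A proper $3$-coloring $\gamma$ corresponds to $\mu$ if, mod $3$: $\gamma(v_{1,j+1})=\gamma(v_{1,j})+\mu(e_{3j-1})$ for $1\le j\le n-1$; $\gamma(v_{2,n})=\gamma(v_{1,n})+\mu(e_{3n-3})$; $\gamma(v_{2,j-1})=\gamma(v_{2,j})+\mu(e_{3j-2})$ for $2\le j\le n$ (each locally valid $\mu$ corresponds to exactly three colorings, one per value of $\gamma(v_{1,1})$). Edge weight $w(\gamma,\overrightarrow{ab})\in\{1,-1\}$ with $w\equiv\gamma(b)-\gamma(a)$ mod $3$; path weight is the sum of edge weights (path independent). Relative height $h_{\gamma,u}(\beta,v)=w(\beta,P_{u,v})-w(\gamma,P_{u,v})$ for a directed path $P_{u,v}$ from $u$ to $v$. *)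

theory Defs
  imports Complex_Main "HOL-Number_Theory.Cong"
begin

text \<open>Creases are indexed by natural numbers: e_0 and e_{3k-1}, e_{3k}, e_{3k+1}
  for k = 1..n-1, i.e. the index set {0} \<union> {2..3n-2}.\<close>

definition creases :: "nat \<Rightarrow> nat set" where
  "creases n = {0} \<union> (\<Union>k\<in>{1..n-1}. {3*k-1, 3*k, 3*k+1})"

definition faces :: "nat \<Rightarrow> (nat \<times> nat) set" where
  "faces n = {1,2} \<times> {1..n}"

definition face_border :: "nat \<Rightarrow> nat \<times> nat \<Rightarrow> nat set" where
  "face_border n \<alpha> = (case \<alpha> of (i,j) \<Rightarrow>
     if i = 1 then {c. (c = 3*j-4 \<and> j \<ge> 2) \<or> c = 3*j-3 \<or> (c = 3*j-1 \<and> j \<le> n-1)}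
     else {c. (c = 3*j-2 \<and> j \<ge> 2) \<or> c = 3*j-3 \<or> (c = 3*j+1 \<and> j \<le> n-1)})"

text \<open>An MV assignment: values in {1,-1} on the creases; we fix the value 0 off the
  creases so that assignments are determined by their values on the creases.\<close>
definition mv_assignment :: "nat \<Rightarrow> (nat \<Rightarrow> int) \<Rightarrow> bool" where
  "mv_assignment n \<mu> \<longleftrightarrow> (\<forall>c\<in>creases n. \<mu> c \<in> {1,-1}) \<and> (\<forall>c. c \<notin> creases n \<longrightarrow> \<mu> c = 0)"

definition locally_valid :: "nat \<Rightarrow> (nat \<Rightarrow> int) \<Rightarrow> bool" where
  "locally_valid n \<mu> \<longleftrightarrow> mv_assignment n \<mu> \<and>
     (\<forall>k\<in>{1..n-1}. card {c \<in> {3*k-1, 3*k, 3*k+1}. \<mu> c \<noteq> \<mu> (3*k-3)} = 1)"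

definition face_flip :: "nat \<Rightarrow> nat \<times> nat \<Rightarrow> (nat \<Rightarrow> int) \<Rightarrow> (nat \<Rightarrow> int)" where
  "face_flip n \<alpha> \<mu> = (\<lambda>c. if c \<in> face_border n \<alpha> then - \<mu> c else \<mu> c)"

definition flippable :: "nat \<Rightarrow> (nat \<Rightarrow> int) \<Rightarrow> nat \<times> nat \<Rightarrow> bool" where
  "flippable n \<mu> \<alpha> \<longleftrightarrow> \<alpha> \<in> faces n \<and> locally_valid n \<mu> \<and> locally_valid n (face_flip n \<alpha> \<mu>)"

definition ofg_adj :: "nat \<Rightarrow> (nat \<Rightarrow> int) \<Rightarrow> (nat \<Rightarrow> int) \<Rightarrow> bool" where
  "ofg_adj n \<mu> \<nu> \<longleftrightarrow> (\<exists>\<alpha>. flippable n \<mu> \<alpha> \<and> \<nu> = face_flip n \<alpha> \<mu>)"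

definition ofg_degree :: "nat \<Rightarrow> (nat \<Rightarrow> int) \<Rightarrow> nat" where
  "ofg_degree n \<mu> = card {\<nu>. ofg_adj n \<mu> \<nu>}"

definition ofg_dist_is :: "nat \<Rightarrow> (nat \<Rightarrow> int) \<Rightarrow> (nat \<Rightarrow> int) \<Rightarrow> nat \<Rightarrow> bool" where
  "ofg_dist_is n \<mu> \<nu> d \<longleftrightarrow> (ofg_adj n ^^ d) \<mu> \<nu> \<and> (\<forall>k<d. \<not> (ofg_adj n ^^ k) \<mu> \<nu>)"

definition dual_vertices :: "nat \<Rightarrow> (nat \<times> nat) set" where
  "dual_vertices n = {1,2} \<times> {1..n}"

definition dual_adj :: "nat \<Rightarrow> nat \<times> nat \<Rightarrow> nat \<times> nat \<Rightarrow> bool" where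
  "dual_adj n u v \<longleftrightarrow> u \<in> dual_vertices n \<and> v \<in> dual_vertices n \<and>
     ((fst u = fst v \<and> (snd v = snd u + 1 \<or> snd u = snd v + 1)) \<or>
      (snd u = snd v \<and> fst u \<noteq> fst v))"

text \<open>Colors in Z_3 represented by the integers 0,1,2.\<close>
definition proper_3coloring :: "nat \<Rightarrow> (nat \<times> nat \<Rightarrow> int) \<Rightarrow> bool" where
  "proper_3coloring n \<gamma> \<longleftrightarrow> (\<forall>v\<in>dual_vertices n. \<gamma> v \<in> {0,1,2}) \<and>
     (\<forall>u v. dual_adj n u v \<longrightarrow> \<gamma> u \<noteq> \<gamma> v)"

definition corresponds :: "nat \<Rightarrow> (nat \<times> nat \<Rightarrow> int) \<Rightarrow> (nat \<Rightarrow> int) \<Rightarrow> bool" where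
  "corresponds n \<gamma> \<mu> \<longleftrightarrow>
     (\<forall>j\<in>{1..n-1}. [\<gamma> (1, j+1) = \<gamma> (1, j) + \<mu> (3*j-1)] (mod 3)) \<and>
     [\<gamma> (2, n) = \<gamma> (1, n) + \<mu> (3*n-3)] (mod 3) \<and>
     (\<forall>j\<in>{2..n}. [\<gamma> (2, j-1) = \<gamma> (2, j) + \<mu> (3*j-2)] (mod 3))"

definition edge_weight :: "(nat \<times> nat \<Rightarrow> int) \<Rightarrow> nat \<times> nat \<Rightarrow> nat \<times> nat \<Rightarrow> int" where
  "edge_weight \<gamma> a b = (if (\<gamma> b - \<gamma> a) mod 3 = 1 then 1 else -1)"

fun walk_weight :: "(nat \<times> nat \<Rightarrow> int) \<Rightarrow> (nat \<times> nat) list \<Rightarrow> int" where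
  "walk_weight \<gamma> (a # b # rest) = edge_weight \<gamma> a b + walk_weight \<gamma> (b # rest)"
| "walk_weight \<gamma> _ = 0"

text \<open>A fixed directed path from v_{1,1} to v_{i,j}: along the first row to v_{1,j},
  then (if i = 2) down to v_{2,j}.  (Path weights are path independent.)\<close>
definition path_from_v11 :: "nat \<times> nat \<Rightarrow> (nat \<times> nat) list" where
  "path_from_v11 v = map (\<lambda>k. (1::nat, k)) [1..<snd v + 1] @ (if fst v = 2 then [(2, snd v)] else [])"

definition rel_height :: "(nat \<times> nat \<Rightarrow> int) \<Rightarrow> (nat \<times> nat \<Rightarrow> int) \<Rightarrow> nat \<times> nat \<Rightarrow> int" where
  "rel_height \<gamma> \<beta> v = walk_weight \<beta> (path_from_v11 v) - walk_weight \<gamma> (path_from_v11 v)"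

end

theory Submission
  imports Defs
begin

(* A locally valid assignment is the same as an integer height function h on the dual grid
   (adjacent vertices differ by one), unique up to an additive constant; h mod 3 is a
   corresponding coloring and relative heights are differences of heights.  A face is flippable
   iff its dual vertex is a local extremum of h, and the flip moves h there by 2.  Hence a flip
   changes sum_v |h1 v - h2 v - c| by at most 2, while flipping at a vertex where h1 - h2 is
   maximal decreases it by exactly 2: the flip distance is half the minimum of this sum over
   the even shifts c.  Pairing column j with column n + 1 - j yields a shift for which the sum
   is at most 2 ceil(n^2/2).  In a degree-2 assignment the column sums h(1,j) + h(2,j) form a
   progression with step 2 or -2 (otherwise there are three weak local extrema, hence three
   flippable faces), and the same pairing shows that between h and -h the sum is at least
   2 ceil(n^2/2) for every shift. *)

section \<open>Finite sums and integer sequences\<close>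

lemma card_filter_three:
  assumes "p \<noteq> q" "p \<noteq> r" "q \<noteq> r"
  shows "card {c \<in> {p, q, r}. P c} = of_bool (P p) + of_bool (P q) + of_bool (P r)"
proof -
  have "{c \<in> {p, q, r}. P c} = (if P p then {p} else {}) \<union> (if P q then {q} else {}) \<union> (if P r then {r} else {})"
    by auto
  then show ?thesis using assms by (cases "P p"; cases "P q"; cases "P r") auto
qed

lemma three_le_card_add:
  assumes "finite X" "finite Y" "a \<in> X" "b \<in> X" "a \<noteq> b" "c \<in> Y"
  shows "3 \<le> card X + card Y"
proof -
  have "card {a, b} \<le> card X" using assms by (intro card_mono) auto
  moreover have "card Y \<noteq> 0" using assms by auto
  ultimately show ?thesis using assms(5) by simp
qed

lemma sum_diff_eq_single:
  fixes f g :: "'a \<Rightarrow> 'b::ab_group_add"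
  assumes "finite A" "v \<in> A" "\<And>x. x \<in> A \<Longrightarrow> x \<noteq> v \<Longrightarrow> f x = g x"
  shows "sum f A - sum g A = f v - g v"
proof -
  have "sum f (A - {v}) = sum g (A - {v})" using assms(3) by (intro sum.cong) auto
  then show ?thesis using assms(1,2) by (simp add: sum.remove)
qed

lemma finite_obtains_lex_max:
  fixes f g :: "'a \<Rightarrow> 'b::linorder"
  assumes "finite A" "A \<noteq> {}"
  obtains x where "x \<in> A" "\<And>y. y \<in> A \<Longrightarrow> f y \<le> f x" "\<And>y. y \<in> A \<Longrightarrow> f y = f x \<Longrightarrow> g y \<le> g x"
proof -
  define S where "S = {y \<in> A. f y = Max (f ` A)}"
  have "Max (f ` A) \<in> f ` A" using assms by simp
  then have "finite S" "S \<noteq> {}" using assms(1) unfolding S_def by auto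
  then obtain x where "x \<in> S" "Max (g ` S) = g x" by (rule obtains_MAX)
  show ?thesis
  proof (rule that)
    show "x \<in> A" using \<open>x \<in> S\<close> unfolding S_def by auto
    show "f y \<le> f x" if "y \<in> A" for y
      using \<open>x \<in> S\<close> that assms(1) unfolding S_def by auto
    show "g y \<le> g x" if "y \<in> A" "f y = f x" for y
    proof -
      have "y \<in> S" using that \<open>x \<in> S\<close> unfolding S_def by auto
      then show ?thesis using \<open>finite S\<close> \<open>Max (g ` S) = g x\<close> by (metis Max_ge finite_imageI imageI)
    qed
  qed
qed

lemma sum_atLeastAtMost_pairs:
  fixes f :: "nat \<Rightarrow> 'a::comm_monoid_add"
  shows "(\<Sum>j=1..n. f j) = (\<Sum>j=1..n div 2. f j + f (Suc n - j)) + (if odd n then f (Suc (n div 2)) else 0)"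
proof -
  define k where "k = n div 2"
  have "{1..n} = {1..k} \<union> ({Suc k..n - k} \<union> {Suc (n - k)..n})" unfolding k_def by auto
  then have "(\<Sum>j=1..n. f j) = (\<Sum>j=1..k. f j) + ((\<Sum>j=Suc k..n - k. f j) + (\<Sum>j=Suc (n - k)..n. f j))"
    by (simp only:) (subst sum.union_disjoint; auto simp: k_def)+
  also have "(\<Sum>j=Suc (n - k)..n. f j) = (\<Sum>j=1..k. f (Suc n - j))"
    by (rule sum.reindex_bij_witness[where i="\<lambda>j. Suc n - j" and j="\<lambda>j. Suc n - j"])
      (auto simp: k_def)
  also have "(\<Sum>j=Suc k..n - k. f j) = (if odd n then f (Suc k) else 0)"
    unfolding k_def by (auto elim!: oddE)
  finally show ?thesis unfolding k_def by (simp add: sum.distrib ac_simps)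
qed

lemma sum_pair_radii:
  "(\<Sum>j=1..n div 2. 2 * (int n + 1 - 2 * int j)) + (if odd n then 1 else 0) = int ((n\<^sup>2 + 1) div 2)"
proof -
  have gauss: "(\<Sum>j=1..k. 2 * (int n + 1 - 2 * int j)) = 2 * int k * (int n - int k)" for k
    by (induction k) (auto simp: algebra_simps)
  show ?thesis
    unfolding gauss by (cases "even n") (auto elim!: evenE oddE simp: power2_eq_square algebra_simps)
qed

lemma abs_diff_le_mult_dist:
  fixes t :: "nat \<Rightarrow> int"
  assumes step: "\<And>j. 1 \<le> j \<Longrightarrow> j < n \<Longrightarrow> \<bar>t (Suc j) - t j\<bar> \<le> L"
    and "1 \<le> i" "i \<le> j" "j \<le> n"
  shows "\<bar>t j - t i\<bar> \<le> L * int (j - i)"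
  using \<open>i \<le> j\<close> \<open>j \<le> n\<close>
proof (induction j rule: dec_induct)
  case (step j)
  have "\<bar>t (Suc j) - t j\<bar> \<le> L" using assms(1,2) step by simp
  then show ?case using step by (simp add: Suc_diff_le algebra_simps)
qed simp

lemma abs_pair_le:
  fixes a b x R :: int
  shows "\<bar>a - b\<bar> \<le> R \<Longrightarrow> \<bar>a + b - 2 * x\<bar> \<le> R \<Longrightarrow> \<bar>a - x\<bar> + \<bar>b - x\<bar> \<le> R"
  by arith

lemma abs_diff_pair_eq:
  fixes a b m :: int
  shows "\<bar>a - b\<bar> \<le> 1 \<Longrightarrow> \<bar>a - m\<bar> + \<bar>b - m\<bar> = \<bar>a + b - 2 * m\<bar>"
  by arith

lemma exists_even_near_both:
  fixes u c :: int
  assumes "\<bar>u - 2 * c\<bar> \<le> 4"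
  shows "\<exists>m. \<bar>c - 2 * m\<bar> \<le> 1 \<and> \<bar>u - 4 * m\<bar> \<le> 4"
  using assms unfolding abs_le_iff by presburger

lemma exists_even_shift_innermost:
  fixes t :: "nat \<Rightarrow> int"
  assumes step: "\<And>j. 1 \<le> j \<Longrightarrow> j < n \<Longrightarrow> \<bar>t (Suc j) - t j\<bar> \<le> 2"
  defines "k \<equiv> n div 2"
  obtains m where "1 \<le> k \<Longrightarrow> \<bar>t k + t (Suc n - k) - 4 * m\<bar> \<le> 2 * (int n + 1 - 2 * int k)"
    and "odd n \<Longrightarrow> \<bar>t (Suc k) - 2 * m\<bar> \<le> 1"
proof (cases "even n")
  case True
  then have "2 * (int n + 1 - 2 * int k) = 2" unfolding k_def by auto
  moreover have "\<bar>u - 4 * ((u + 2) div 4)\<bar> \<le> 2" for u :: int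
    by (simp add: abs_le_iff) presburger
  ultimately show ?thesis using True by (intro that) auto
next
  case odd: False
  show ?thesis
  proof (cases "k = 0")
    case True
    have "\<bar>u - 2 * (u div 2)\<bar> \<le> 1" for u :: int
      by (simp add: abs_le_iff)
    then show ?thesis using True by (intro that[of "t 1 div 2"]) auto
  next
    case False
    have n: "n = Suc (2 * k)" using odd unfolding k_def by presburger
    have "\<bar>t k - t (Suc k)\<bar> \<le> 2" "\<bar>t (Suc (Suc k)) - t (Suc k)\<bar> \<le> 2"
      using step[of k] step[of "Suc k"] False n by (auto simp: abs_minus_commute)
    then have "\<bar>t k + t (Suc n - k) - 2 * t (Suc k)\<bar> \<le> 4" using n by (simp add: Suc_diff_le)
    then obtain m where "\<bar>t (Suc k) - 2 * m\<bar> \<le> 1" "\<bar>t k + t (Suc n - k) - 4 * m\<bar> \<le> 4"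
      using exists_even_near_both by blast
    then show ?thesis using n by (intro that) auto
  qed
qed

text \<open>Pair \<open>j\<close> with \<open>n + 1 - j\<close>. The constraints on the even shift coming from the pairs are nested,
  so it suffices to satisfy the innermost one and, for odd \<open>n\<close>, the middle term.\<close>
lemma exists_even_center:
  fixes t :: "nat \<Rightarrow> int"
  assumes step: "\<And>j. 1 \<le> j \<Longrightarrow> j < n \<Longrightarrow> \<bar>t (Suc j) - t j\<bar> \<le> 2"
  shows "\<exists>m. (\<Sum>j=1..n. \<bar>t j - 2 * m\<bar>) \<le> int ((n\<^sup>2 + 1) div 2)"
proof -
  define k where "k = n div 2"
  define R where "R j = 2 * (int n + 1 - 2 * int j)" for j
  have dist: "\<bar>t j - t i\<bar> \<le> 2 * int (j - i)" if "1 \<le> i" "i \<le> j" "j \<le> n" for i j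
    using abs_diff_le_mult_dist[where t=t, OF step that] by simp
  obtain m where inner: "1 \<le> k \<Longrightarrow> \<bar>t k + t (Suc n - k) - 4 * m\<bar> \<le> R k"
    and center: "odd n \<Longrightarrow> \<bar>t (Suc k) - 2 * m\<bar> \<le> 1"
    using exists_even_shift_innermost[where t=t, OF step] unfolding R_def k_def by blast
  have pair: "\<bar>t j - 2 * m\<bar> + \<bar>t (Suc n - j) - 2 * m\<bar> \<le> R j" if j: "j \<in> {1..k}" for j
  proof (rule abs_pair_le)
    have le: "1 \<le> j" "j \<le> k" "k \<le> Suc n - k" "Suc n - k \<le> Suc n - j" "Suc n - j \<le> n" "2 * j \<le> n"
      using j unfolding k_def by auto
    show "\<bar>t j - t (Suc n - j)\<bar> \<le> R j"
      using dist[of j "Suc n - j"] le unfolding R_def by (simp add: abs_minus_commute)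
    have "\<bar>t k - t j\<bar> \<le> 2 * int (k - j)" "\<bar>t (Suc n - j) - t (Suc n - k)\<bar> \<le> 2 * int (k - j)"
      using dist[of j k] dist[of "Suc n - k" "Suc n - j"] le by auto
    moreover have "R k + 4 * int (k - j) = R j" using j unfolding R_def by auto
    ultimately show "\<bar>t j + t (Suc n - j) - 2 * (2 * m)\<bar> \<le> R j"
      using inner j by (auto simp: abs_le_iff)
  qed
  have "(\<Sum>j=1..n. \<bar>t j - 2 * m\<bar>)
      = (\<Sum>j=1..k. \<bar>t j - 2 * m\<bar> + \<bar>t (Suc n - j) - 2 * m\<bar>)
        + (if odd n then \<bar>t (Suc k) - 2 * m\<bar> else 0)"
    unfolding k_def by (rule sum_atLeastAtMost_pairs)
  also have "\<dots> \<le> (\<Sum>j=1..k. R j) + (if odd n then 1 else 0)"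
    using center by (intro add_mono sum_mono pair) auto
  also have "\<dots> = int ((n\<^sup>2 + 1) div 2)"
    unfolding R_def k_def by (rule sum_pair_radii)
  finally show ?thesis by blast
qed

lemma sum_abs_progression_ge:
  fixes t :: "nat \<Rightarrow> int"
  assumes step: "\<And>j. 1 \<le> j \<Longrightarrow> j < n \<Longrightarrow> t (Suc j) = t j + d" and "\<bar>d\<bar> = 2" and "odd (t 1)"
  shows "int ((n\<^sup>2 + 1) div 2) \<le> (\<Sum>j=1..n. \<bar>t j - 2 * m\<bar>)"
proof -
  define k where "k = n div 2"
  have t: "t j = t 1 + int (j - 1) * d" if "1 \<le> j" "j \<le> n" for j
    using that by (induction j rule: dec_induct) (auto simp: step algebra_simps)
  have pair: "2 * (int n + 1 - 2 * int j) \<le> \<bar>t j - 2 * m\<bar> + \<bar>t (Suc n - j) - 2 * m\<bar>"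
    if j: "j \<in> {1..k}" for j
  proof -
    have bounds: "1 \<le> j" "j \<le> n" "1 \<le> Suc n - j" "Suc n - j \<le> n" "2 * j \<le> n"
      using j unfolding k_def by auto
    have "t (Suc n - j) - t j = int (n + 1 - 2 * j) * d"
      using t[OF bounds(1,2)] t[OF bounds(3,4)] bounds by (simp add: algebra_simps)
    then have "\<bar>t (Suc n - j) - t j\<bar> = 2 * (int n + 1 - 2 * int j)"
      using j \<open>\<bar>d\<bar> = 2\<close> unfolding k_def by (auto simp: abs_mult)
    then show ?thesis by linarith
  qed
  have center: "1 \<le> \<bar>t (Suc k) - 2 * m\<bar>"
  proof -
    have "d = 2 \<or> d = -2" using \<open>\<bar>d\<bar> = 2\<close> by auto
    then have "even d" by auto
    then have "odd (t (Suc k) - 2 * m)"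
      using t[of "Suc k"] \<open>odd (t 1)\<close> unfolding k_def by (cases "n = 0") auto
    then show ?thesis by presburger
  qed
  have "int ((n\<^sup>2 + 1) div 2) = (\<Sum>j=1..k. 2 * (int n + 1 - 2 * int j)) + (if odd n then 1 else 0)"
    unfolding k_def by (rule sum_pair_radii[symmetric])
  also have "\<dots> \<le> (\<Sum>j=1..k. \<bar>t j - 2 * m\<bar> + \<bar>t (Suc n - j) - 2 * m\<bar>)
        + (if odd n then \<bar>t (Suc k) - 2 * m\<bar> else 0)"
    using center by (intro add_mono sum_mono pair) auto
  also have "\<dots> = (\<Sum>j=1..n. \<bar>t j - 2 * m\<bar>)"
    unfolding k_def by (rule sum_atLeastAtMost_pairs[symmetric])
  finally show ?thesis .
qed

definition seq_local_max :: "nat \<Rightarrow> (nat \<Rightarrow> int) \<Rightarrow> nat \<Rightarrow> bool" where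
  "seq_local_max n s j \<longleftrightarrow> j \<in> {1..n} \<and> (2 \<le> j \<longrightarrow> s (j - 1) \<le> s j) \<and> (j < n \<longrightarrow> s (Suc j) \<le> s j)"

lemma seq_local_max_exists:
  assumes "1 \<le> n"
  obtains j where "seq_local_max n s j"
proof -
  have "{1..n} \<noteq> {}" using assms by simp
  then obtain p where p: "p \<in> {1..n}" "Max (s ` {1..n}) = s p"
    by (rule obtains_MAX[OF finite_atLeastAtMost])
  then have le: "s j \<le> s p" if "j \<in> {1..n}" for j
    using that by (metis Max_ge finite_atLeastAtMost finite_imageI imageI)
  have "seq_local_max n s p" unfolding seq_local_max_def
  proof (intro conjI impI)
    show "s (p - 1) \<le> s p" if "2 \<le> p"
      using that p(1) by (intro le) auto
    show "s (Suc p) \<le> s p" if "p < n"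
      using that by (intro le) auto
  qed (use p(1) in auto)
  then show ?thesis by (rule that)
qed

lemma seq_local_max_first_descent:
  assumes "s 1 < s 2" and "\<exists>j\<in>{1..<n}. s (Suc j) \<le> s j"
  obtains j where "1 < j" "j < n" "seq_local_max n s j"
proof -
  let ?P = "\<lambda>j. 1 \<le> j \<and> j < n \<and> s (Suc j) \<le> s j"
  obtain j where j: "?P j" and least: "\<And>i. i < j \<Longrightarrow> \<not> ?P i"
    using assms(2) exists_least_iff[of ?P] by auto
  have "j \<noteq> 1" using j assms(1) by (auto simp: numeral_2_eq_2)
  then have "1 < j" using j by auto
  then have "j - 1 < j" "1 \<le> j - 1" "j - 1 < n" "Suc (j - 1) = j" using j by auto
  then have "s (j - 1) < s j" using least[of "j - 1"] by (simp add: not_le)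
  then have "seq_local_max n s j" using j unfolding seq_local_max_def by auto
  then show ?thesis using that \<open>1 < j\<close> j by blast
qed

lemma three_seq_local_extrema:
  fixes s :: "nat \<Rightarrow> int"
  assumes n: "2 \<le> n" and down: "\<exists>j\<in>{1..<n}. s (Suc j) \<le> s j" and up: "\<exists>j\<in>{1..<n}. s j \<le> s (Suc j)"
  shows "3 \<le> card {j. seq_local_max n s j} + card {j. seq_local_max n (\<lambda>j. - s j) j}"
proof -
  let ?M = "{j. seq_local_max n s j}" and ?m = "{j. seq_local_max n (\<lambda>j. - s j) j}"
  have fin: "finite ?M" "finite ?m"
    by (rule finite_subset[of _ "{1..n}"], auto simp: seq_local_max_def)+
  have first: "seq_local_max n t 1 \<longleftrightarrow> t 2 \<le> t 1" for t
    using n unfolding seq_local_max_def by (simp add: numeral_2_eq_2)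
  have last: "seq_local_max n t n \<longleftrightarrow> t (n - 1) \<le> t n" for t
    using n unfolding seq_local_max_def by simp
  have "1 \<le> n" using n by simp
  obtain p where p: "seq_local_max n s p" by (rule seq_local_max_exists[OF \<open>1 \<le> n\<close>])
  obtain q where q: "seq_local_max n (\<lambda>j. - s j) q" by (rule seq_local_max_exists[OF \<open>1 \<le> n\<close>])
  have "1 \<noteq> n" using n by simp
  consider "s 2 \<le> s 1" "s (n - 1) \<le> s n" | "s 1 \<le> s 2" "s n \<le> s (n - 1)"
    | "s 1 < s 2" "s (n - 1) < s n" | "s 2 < s 1" "s n < s (n - 1)" by linarith
  then show ?thesis
  proof cases
    case 1
    then show ?thesis using three_le_card_add[OF fin, of 1 n q] first last q \<open>1 \<noteq> n\<close> by auto
  next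
    case 2
    then show ?thesis using three_le_card_add[OF fin(2,1), of 1 n p] first last p \<open>1 \<noteq> n\<close> by auto
  next
    case 3
    obtain j where "1 < j" "j < n" "seq_local_max n s j"
      using seq_local_max_first_descent[of s n] 3 down by blast
    then show ?thesis using three_le_card_add[OF fin, of j n 1] first last 3 by auto
  next
    case 4
    obtain j where "1 < j" "j < n" "seq_local_max n (\<lambda>j. - s j) j"
      using seq_local_max_first_descent[of "\<lambda>j. - s j" n] 4 up by auto
    then show ?thesis using three_le_card_add[OF fin(2,1), of j n 1] first last 4 by auto
  qed
qed

section \<open>Height functions\<close>

lemma creases_iff: "c \<in> creases n \<longleftrightarrow> c = 0 \<or> 2 \<le> c \<and> c + 2 \<le> 3 * n"
proof
  assume c: "c = 0 \<or> 2 \<le> c \<and> c + 2 \<le> 3 * n"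
  show "c \<in> creases n"
  proof (cases "c = 0")
    case False
    define k where "k = (c + 1) div 3"
    have "k \<in> {1..n - 1}" "c \<in> {3 * k - 1, 3 * k, 3 * k + 1}" using c False unfolding k_def by auto
    then show ?thesis unfolding creases_def by blast
  qed (simp add: creases_def)
qed (auto simp: creases_def)

lemma mv_assignment_values: "mv_assignment n \<mu> \<Longrightarrow> c \<in> creases n \<Longrightarrow> \<mu> c = 1 \<or> \<mu> c = -1"
  unfolding mv_assignment_def by auto

lemma creases_at_vertex:
  assumes "1 \<le> k" "k < n"
  shows "3 * k - 3 \<in> creases n" "3 * k - 1 \<in> creases n" "3 * k \<in> creases n" "3 * k + 1 \<in> creases n"
  using assms by (auto simp: creases_iff)

lemma crease_between_rows:
  assumes "1 \<le> j" "j \<le> n"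
  shows "3 * j - 3 \<in> creases n"
  using assms by (auto simp: creases_iff)

lemma locally_valid_iff_sum:
  assumes mv: "mv_assignment n \<mu>"
  shows "locally_valid n \<mu> \<longleftrightarrow>
    (\<forall>k. 1 \<le> k \<and> k < n \<longrightarrow> \<mu> (3 * k - 1) + \<mu> (3 * k) + \<mu> (3 * k + 1) = \<mu> (3 * k - 3))"
proof -
  have "card {c \<in> {3 * k - 1, 3 * k, 3 * k + 1}. \<mu> c \<noteq> \<mu> (3 * k - 3)} = 1 \<longleftrightarrow>
      \<mu> (3 * k - 1) + \<mu> (3 * k) + \<mu> (3 * k + 1) = \<mu> (3 * k - 3)" if k: "1 \<le> k" "k < n" for k
  proof -
    have "3 * k - 1 \<noteq> 3 * k" "3 * k - 1 \<noteq> 3 * k + 1" "3 * k \<noteq> 3 * k + 1" using k by auto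
    moreover have "\<mu> (3 * k - 3) = 1 \<or> \<mu> (3 * k - 3) = -1" "\<mu> (3 * k - 1) = 1 \<or> \<mu> (3 * k - 1) = -1"
        "\<mu> (3 * k) = 1 \<or> \<mu> (3 * k) = -1" "\<mu> (3 * k + 1) = 1 \<or> \<mu> (3 * k + 1) = -1"
      using mv_assignment_values[OF mv] creases_at_vertex[OF k] by auto
    ultimately show ?thesis by (subst card_filter_three) (elim disjE; simp)+
  qed
  then show ?thesis using mv unfolding locally_valid_def by auto
qed

lemma finite_dual_vertices [simp]: "finite (dual_vertices n)"
  unfolding dual_vertices_def by simp

lemma faces_eq_dual_vertices: "faces n = dual_vertices n"
  unfolding faces_def dual_vertices_def ..

lemma sum_dual_vertices: "(\<Sum>v\<in>dual_vertices n. g v) = (\<Sum>j=1..n. g (1, j) + g (2, j))"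
proof -
  have "(\<Sum>v\<in>dual_vertices n. g v) = (\<Sum>i\<in>{1, 2}. \<Sum>j=1..n. g (i, j))"
    unfolding dual_vertices_def by (simp add: sum.cartesian_product case_prod_beta')
  then show ?thesis by (simp add: sum.distrib)
qed

lemma sum_dual_vertices_abs_by_columns:
  fixes f :: "nat \<times> nat \<Rightarrow> int"
  assumes "\<And>j. 1 \<le> j \<Longrightarrow> j \<le> n \<Longrightarrow> \<bar>f (1, j) - f (2, j)\<bar> \<le> 1"
  shows "(\<Sum>v\<in>dual_vertices n. \<bar>f v - m\<bar>) = (\<Sum>j=1..n. \<bar>f (1, j) + f (2, j) - 2 * m\<bar>)"
  unfolding sum_dual_vertices using assms by (intro sum.cong abs_diff_pair_eq) auto

text \<open>An integer lift of the 3-colorings corresponding to \<open>\<mu>\<close>: every crease is crossed by one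
  edge of \<open>M\<^sup>*\<close>, and \<open>\<mu>\<close> is the height difference along it.\<close>
definition is_height :: "nat \<Rightarrow> (nat \<Rightarrow> int) \<Rightarrow> (nat \<times> nat \<Rightarrow> int) \<Rightarrow> bool" where
  "is_height n \<mu> h \<longleftrightarrow>
     (\<forall>k. 1 \<le> k \<and> k < n \<longrightarrow> \<mu> (3 * k - 1) = h (1, k + 1) - h (1, k) \<and> \<mu> (3 * k + 1) = h (2, k) - h (2, k + 1)) \<and>
     (\<forall>j. 1 \<le> j \<and> j \<le> n \<longrightarrow> \<mu> (3 * j - 3) = h (2, j) - h (1, j))"

definition height_of :: "(nat \<Rightarrow> int) \<Rightarrow> nat \<times> nat \<Rightarrow> int" where
  "height_of \<mu> v = (\<Sum>k\<in>{1..<snd v}. \<mu> (3 * k - 1)) + (if fst v = 2 then \<mu> (3 * snd v - 3) else 0)"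

lemma is_heightD:
  assumes "is_height n \<mu> h"
  shows "\<And>k. 1 \<le> k \<Longrightarrow> k < n \<Longrightarrow> \<mu> (3 * k - 1) = h (1, k + 1) - h (1, k)"
    "\<And>k. 1 \<le> k \<Longrightarrow> k < n \<Longrightarrow> \<mu> (3 * k + 1) = h (2, k) - h (2, k + 1)"
    "\<And>k. 1 \<le> k \<Longrightarrow> k < n \<Longrightarrow> \<mu> (3 * k) = h (2, k + 1) - h (1, k + 1)"
    "\<And>j. 1 \<le> j \<Longrightarrow> j \<le> n \<Longrightarrow> \<mu> (3 * j - 3) = h (2, j) - h (1, j)"
proof -
  fix k assume "1 \<le> k" "k < n"
  then have "\<mu> (3 * (k + 1) - 3) = h (2, k + 1) - h (1, k + 1)"
    using assms unfolding is_height_def by (metis Suc_eq_plus1 Suc_leI le_add2)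
  then show "\<mu> (3 * k) = h (2, k + 1) - h (1, k + 1)" by simp
qed (use assms in \<open>auto simp: is_height_def\<close>)

lemma cycle_sum_if_is_height:
  assumes "is_height n \<mu> h" "1 \<le> k" "k < n"
  shows "\<mu> (3 * k - 1) + \<mu> (3 * k) + \<mu> (3 * k + 1) = \<mu> (3 * k - 3)"
  using is_heightD[OF assms(1)] assms(2,3) by simp

lemma locally_valid_if_is_height:
  assumes "mv_assignment n \<mu>" "is_height n \<mu> h"
  shows "locally_valid n \<mu>"
  unfolding locally_valid_iff_sum[OF assms(1)] using cycle_sum_if_is_height[OF assms(2)] by blast

lemma is_height_height_of:
  assumes "locally_valid n \<mu>"
  shows "is_height n \<mu> (height_of \<mu>)"
proof -
  have "mv_assignment n \<mu>" using assms locally_valid_def by auto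
  then have "\<mu> (3 * k - 1) + \<mu> (3 * k) + \<mu> (3 * k + 1) = \<mu> (3 * k - 3)" if "1 \<le> k" "k < n" for k
    using assms that locally_valid_iff_sum by auto
  moreover have "3 * (k + 1) - 3 = 3 * k" for k :: nat by simp
  ultimately show ?thesis unfolding is_height_def height_of_def by (auto simp: algebra_simps)
qed

lemma height_step_row:
  assumes "mv_assignment n \<mu>" "is_height n \<mu> h" "i \<in> {1, 2}" "1 \<le> k" "k < n"
  shows "\<bar>h (i, k + 1) - h (i, k)\<bar> = 1"
  using mv_assignment_values[OF assms(1) creases_at_vertex(2)[OF assms(4,5)]]
    mv_assignment_values[OF assms(1) creases_at_vertex(4)[OF assms(4,5)]]
    is_heightD(1,2)[OF assms(2,4,5)] assms(3) by auto

lemma height_step_column: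
  assumes "mv_assignment n \<mu>" "is_height n \<mu> h" "1 \<le> j" "j \<le> n"
  shows "\<bar>h (2, j) - h (1, j)\<bar> = 1"
  using mv_assignment_values[OF assms(1) crease_between_rows[OF assms(3,4)]]
    is_heightD(4)[OF assms(2,3,4)] by auto

lemma height_adjacent:
  assumes "mv_assignment n \<mu>" "is_height n \<mu> h" "dual_adj n u v"
  shows "\<bar>h u - h v\<bar> = 1"
proof -
  obtain i j i' j' where u: "u = (i, j)" "i \<in> {1, 2}" "1 \<le> j" "j \<le> n"
    and v: "v = (i', j')" "i' \<in> {1, 2}" "1 \<le> j'" "j' \<le> n"
    using assms(3) unfolding dual_adj_def dual_vertices_def by auto
  consider "i' = i" "j' = j + 1" | "i' = i" "j = j' + 1" | "j' = j" "i \<noteq> i'"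
    using assms(3) u v unfolding dual_adj_def by auto
  then show ?thesis
  proof cases
    case 1
    then show ?thesis using height_step_row[OF assms(1,2) u(2,3)] u v by (auto simp: abs_minus_commute)
  next
    case 2
    then show ?thesis using height_step_row[OF assms(1,2) v(2,3)] u v by auto
  next
    case 3
    then have "{i, i'} = {1, 2}" using u v by auto
    then show ?thesis using height_step_column[OF assms(1,2) u(3,4)] u v 3 by (auto simp: abs_minus_commute)
  qed
qed

lemma is_height_shift: "is_height n \<mu> h \<Longrightarrow> is_height n \<mu> (\<lambda>v. h v + c)"
  unfolding is_height_def by auto

lemma is_height_neg: "is_height n \<mu> h \<Longrightarrow> is_height n (\<lambda>c. - \<mu> c) (\<lambda>v. - h v)"
  unfolding is_height_def by auto

lemma is_height_unique:
  assumes "is_height n \<mu> h1" "is_height n \<mu> h2" "v \<in> dual_vertices n"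
  shows "h2 v - h1 v = h2 (1, 1) - h1 (1, 1)"
proof -
  obtain i j where v: "v = (i, j)" "i \<in> {1, 2}" "1 \<le> j" "j \<le> n"
    using assms(3) unfolding dual_vertices_def by auto
  have row: "h2 (1, j) - h1 (1, j) = h2 (1, 1) - h1 (1, 1)" if "1 \<le> j" "j \<le> n" for j
    using that
  proof (induction j rule: nat_induct_at_least)
    case (Suc m)
    then have "1 \<le> m" "m < n" by auto
    from is_heightD(1)[OF assms(1) this] is_heightD(1)[OF assms(2) this]
    show ?case using Suc by simp
  qed simp
  from row[OF v(3,4)] is_heightD(4)[OF assms(1) v(3,4)] is_heightD(4)[OF assms(2) v(3,4)]
  show ?thesis using v by auto
qed

lemma assignment_eq_if_same_height:
  assumes "mv_assignment n \<mu>1" "mv_assignment n \<mu>2" "is_height n \<mu>1 h1" "is_height n \<mu>2 h2"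
    and same: "\<forall>v\<in>dual_vertices n. h1 v = h2 v" and "1 \<le> n"
  shows "\<mu>1 = \<mu>2"
proof
  fix c
  have h: "h1 (i, j) = h2 (i, j)" if "i \<in> {1, 2}" "1 \<le> j" "j \<le> n" for i j
    using same that unfolding dual_vertices_def by auto
  show "\<mu>1 c = \<mu>2 c"
  proof (cases "c \<in> creases n")
    case False
    then show ?thesis using assms(1,2) unfolding mv_assignment_def by auto
  next
    case True
    then consider "c = 0" | k where "1 \<le> k" "k < n" "c \<in> {3 * k - 1, 3 * k, 3 * k + 1}"
      unfolding creases_def by auto
    then show ?thesis
    proof cases
      case 1
      then show ?thesis using is_heightD(4)[OF assms(3), of 1] is_heightD(4)[OF assms(4), of 1]
          h[of 1 1] h[of 2 1] \<open>1 \<le> n\<close> by auto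
    next
      case (2 k)
      then have "1 \<le> k + 1" "k + 1 \<le> n" by auto
      then have "h1 (i, k) = h2 (i, k)" "h1 (i, k + 1) = h2 (i, k + 1)" if "i \<in> {1, 2}" for i
        using h 2 that by auto
      then have "\<mu>1 (3 * k - 1) = \<mu>2 (3 * k - 1)" "\<mu>1 (3 * k) = \<mu>2 (3 * k)" "\<mu>1 (3 * k + 1) = \<mu>2 (3 * k + 1)"
        using is_heightD(1-3)[OF assms(3) 2(1,2)] is_heightD(1-3)[OF assms(4) 2(1,2)] by simp_all
      then show ?thesis using 2(3) by auto
    qed
  qed
qed

lemma height_parity:
  assumes "mv_assignment n \<mu>" "is_height n \<mu> h" "(i, j) \<in> dual_vertices n"
  shows "even (h (i, j) - h (1, 1) + int i + int j)"
proof -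
  have ij: "i \<in> {1, 2}" "1 \<le> j" "j \<le> n" using assms(3) unfolding dual_vertices_def by auto
  have row: "even (h (1, j) - h (1, 1) + 1 + int j)" if "1 \<le> j" "j \<le> n" for j
    using that
  proof (induction j rule: nat_induct_at_least)
    case (Suc m)
    then have "h (1, Suc m) = h (1, m) + 1 \<or> h (1, Suc m) = h (1, m) - 1"
      using height_step_row[OF assms(1,2), of 1 m] by auto
    then show ?case using Suc by auto
  qed simp
  have "h (2, j) = h (1, j) + 1 \<or> h (2, j) = h (1, j) - 1"
    using height_step_column[OF assms(1,2) ij(2,3)] by auto
  then show ?thesis using row[OF ij(2,3)] ij(1) by auto
qed

lemma even_height_diff:
  assumes "mv_assignment n \<mu>1" "is_height n \<mu>1 h1" "mv_assignment n \<mu>2" "is_height n \<mu>2 h2"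
    and "even (h1 (1, 1) - h2 (1, 1))" and "v \<in> dual_vertices n"
  shows "even (h1 v - h2 v)"
proof -
  obtain i j where v: "v = (i, j)" by force
  have "even (h1 v - h1 (1, 1) + int i + int j)" "even (h2 v - h2 (1, 1) + int i + int j)"
    using height_parity[OF assms(1,2), of i j] height_parity[OF assms(3,4), of i j] assms(6) v by auto
  from dvd_add[OF dvd_diff[OF this] assms(5)] show ?thesis by simp
qed

section \<open>Face flips reflect heights at local extrema\<close>

lemma face_border_upper:
  "1 \<le> k \<Longrightarrow> k < n \<Longrightarrow> i \<in> {1, 2} \<Longrightarrow> 1 \<le> j \<Longrightarrow>
    3 * k - 1 \<in> face_border n (i, j) \<longleftrightarrow> i = 1 \<and> (j = k \<or> j = k + 1)"
  unfolding face_border_def by (auto; presburger)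

lemma face_border_lower:
  "1 \<le> k \<Longrightarrow> k < n \<Longrightarrow> i \<in> {1, 2} \<Longrightarrow> 1 \<le> j \<Longrightarrow>
    3 * k + 1 \<in> face_border n (i, j) \<longleftrightarrow> i = 2 \<and> (j = k \<or> j = k + 1)"
  unfolding face_border_def by (auto; presburger)

lemma face_border_middle:
  "1 \<le> k \<Longrightarrow> i \<in> {1, 2} \<Longrightarrow> 1 \<le> j \<Longrightarrow> 3 * k - 3 \<in> face_border n (i, j) \<longleftrightarrow> j = k"
  unfolding face_border_def by (auto; presburger)

lemma face_border_middle_Suc:
  "1 \<le> k \<Longrightarrow> i \<in> {1, 2} \<Longrightarrow> 1 \<le> j \<Longrightarrow> 3 * k \<in> face_border n (i, j) \<longleftrightarrow> j = k + 1"
  unfolding face_border_def by (auto; presburger)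

lemma mv_assignment_face_flip: "mv_assignment n \<mu> \<Longrightarrow> mv_assignment n (face_flip n \<alpha> \<mu>)"
  unfolding mv_assignment_def face_flip_def by auto

lemma face_flip_face_flip [simp]: "face_flip n \<alpha> (face_flip n \<alpha> \<mu>) = \<mu>"
  unfolding face_flip_def by (simp add: fun_eq_iff)

text \<open>Neighbours of \<open>v\<close> differ from \<open>h v\<close> by one, so asking them all to be level says that
  \<open>v\<close> is a strict local extremum of \<open>h\<close>.\<close>
definition local_extremum :: "nat \<Rightarrow> (nat \<times> nat \<Rightarrow> int) \<Rightarrow> nat \<times> nat \<Rightarrow> bool" where
  "local_extremum n h v \<longleftrightarrow> (case v of (i, j) \<Rightarrow>
     (2 \<le> j \<longrightarrow> h (i, j - 1) = h (3 - i, j)) \<and> (j < n \<longrightarrow> h (i, j + 1) = h (3 - i, j)))"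

definition flip_height :: "(nat \<times> nat \<Rightarrow> int) \<Rightarrow> nat \<times> nat \<Rightarrow> nat \<times> nat \<Rightarrow> int" where
  "flip_height h v = h(v := 2 * h (3 - fst v, snd v) - h v)"

lemma local_extremum_neg: "local_extremum n (\<lambda>v. - h v) v \<longleftrightarrow> local_extremum n h v"
  unfolding local_extremum_def by (cases v) auto

lemma local_extremum_if_neighbours_eq:
  assumes "v \<in> dual_vertices n" "\<And>u. dual_adj n v u \<Longrightarrow> h u = c"
  shows "local_extremum n h v"
proof -
  obtain i j where v: "v = (i, j)" "i \<in> {1, 2}" "1 \<le> j" "j \<le> n"
    using assms(1) unfolding dual_vertices_def by auto
  have "dual_adj n v (3 - i, j)" "2 \<le> j \<Longrightarrow> dual_adj n v (i, j - 1)" "j < n \<Longrightarrow> dual_adj n v (i, j + 1)"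
    using v unfolding dual_adj_def dual_vertices_def by auto
  then show ?thesis using assms(2) v unfolding local_extremum_def by auto
qed

lemma flip_height_diff:
  "flip_height h v w - h w = (if w = v then 2 * (h (3 - fst v, snd v) - h v) else 0)"
  by (simp add: flip_height_def)

lemma is_height_face_flip:
  assumes h: "is_height n \<mu> h" and ij: "i \<in> {1, 2}" "1 \<le> j" "j \<le> n" and ext: "local_extremum n h (i, j)"
  shows "is_height n (face_flip n (i, j) \<mu>) (flip_height h (i, j))"
proof -
  let ?\<mu> = "face_flip n (i, j) \<mu>" and ?h = "flip_height h (i, j)"
  have "?\<mu> (3 * k - 1) = ?h (1, k + 1) - ?h (1, k) \<and> ?\<mu> (3 * k + 1) = ?h (2, k) - ?h (2, k + 1)"
    if k: "1 \<le> k" "k < n" for k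
    unfolding face_flip_def face_border_upper[OF k ij(1,2)] face_border_lower[OF k ij(1,2)] flip_height_def
    using is_heightD(1,2)[OF h k] ij ext k unfolding local_extremum_def by auto
  moreover have "?\<mu> (3 * k - 3) = ?h (2, k) - ?h (1, k)" if k: "1 \<le> k" "k \<le> n" for k
    unfolding face_flip_def face_border_middle[OF k(1) ij(1,2)] flip_height_def
    using is_heightD(4)[OF h k] ij ext k unfolding local_extremum_def by auto
  ultimately show ?thesis unfolding is_height_def by auto
qed

lemma local_extremum_if_flip_valid:
  assumes lv: "locally_valid n \<mu>" and h: "is_height n \<mu> h" and ij: "i \<in> {1, 2}" "1 \<le> j" "j \<le> n"
    and lv': "locally_valid n (face_flip n (i, j) \<mu>)"
  shows "local_extremum n h (i, j)"
proof -
  let ?\<mu> = "face_flip n (i, j) \<mu>"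
  have mv: "mv_assignment n \<mu>" using lv locally_valid_def by auto
  have cycle: "?\<mu> (3 * k - 1) + ?\<mu> (3 * k) + ?\<mu> (3 * k + 1) = ?\<mu> (3 * k - 3)"
      "\<mu> (3 * k - 1) + \<mu> (3 * k) + \<mu> (3 * k + 1) = \<mu> (3 * k - 3)" if "1 \<le> k" "k < n" for k
    using that lv lv' locally_valid_iff_sum[OF mv] locally_valid_iff_sum[OF mv_assignment_face_flip[OF mv]]
    by auto
  have flip: "?\<mu> c = (if c \<in> face_border n (i, j) then - \<mu> c else \<mu> c)" for c
    unfolding face_flip_def ..
  \<comment> \<open>Exactly two creases at the vertex change sign, so they must carry the same value.\<close>
  have right: "h (i, j + 1) = h (3 - i, j)" if "j < n"
    using cycle[OF ij(2) that] flip[of "3 * j - 1"] flip[of "3 * j"] flip[of "3 * j + 1"] flip[of "3 * j - 3"]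
      face_border_upper[OF ij(2) that ij(1,2)] face_border_lower[OF ij(2) that ij(1,2)]
      face_border_middle_Suc[OF ij(2) ij(1,2)] face_border_middle[OF ij(2) ij(1,2)]
      is_heightD(1-3)[OF h ij(2) that] is_heightD(4)[OF h ij(2,3)] ij(1)
    by auto
  have left: "h (i, j - 1) = h (3 - i, j)" if "2 \<le> j"
  proof -
    define k where "k = j - 1"
    have k: "1 \<le> k" "k < n" "j = k + 1" using that ij unfolding k_def by auto
    show ?thesis
      using cycle[OF k(1,2)] flip[of "3 * k - 1"] flip[of "3 * k"] flip[of "3 * k + 1"] flip[of "3 * k - 3"]
        face_border_upper[OF k(1,2) ij(1,2)] face_border_lower[OF k(1,2) ij(1,2)]
        face_border_middle_Suc[OF k(1) ij(1,2)] face_border_middle[OF k(1) ij(1,2)]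
        is_heightD(1-3)[OF h k(1,2)] is_heightD(4)[OF h k(1)] ij(1) k(2,3)
      by auto
  qed
  show ?thesis unfolding local_extremum_def using left right by auto
qed

lemma flippable_iff_local_extremum:
  assumes lv: "locally_valid n \<mu>" and h: "is_height n \<mu> h" and f: "(i, j) \<in> faces n"
  shows "flippable n \<mu> (i, j) \<longleftrightarrow> local_extremum n h (i, j)"
proof -
  have ij: "i \<in> {1, 2}" "1 \<le> j" "j \<le> n" using f unfolding faces_def by auto
  have mv: "mv_assignment n \<mu>" using lv locally_valid_def by auto
  show ?thesis
    using local_extremum_if_flip_valid[OF lv h ij] is_height_face_flip[OF h ij]
      locally_valid_if_is_height[OF mv_assignment_face_flip[OF mv]] lv f
    unfolding flippable_def by blast
qed

lemma ofg_adj_flip_local_extremum: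
  assumes lv: "locally_valid n \<mu>" and h: "is_height n \<mu> h" and f: "(i, j) \<in> faces n"
    and ext: "local_extremum n h (i, j)"
  defines "\<mu>' \<equiv> face_flip n (i, j) \<mu>"
  shows "ofg_adj n \<mu> \<mu>'" "ofg_adj n \<mu>' \<mu>" "locally_valid n \<mu>'" "is_height n \<mu>' (flip_height h (i, j))"
proof -
  have fl: "flippable n \<mu> (i, j)" using flippable_iff_local_extremum[OF lv h f] ext by auto
  then show "ofg_adj n \<mu> \<mu>'" unfolding ofg_adj_def \<mu>'_def by auto
  show lv': "locally_valid n \<mu>'" using fl unfolding flippable_def \<mu>'_def by auto
  have "flippable n \<mu>' (i, j)" unfolding flippable_def \<mu>'_def using lv' lv f by (simp add: \<mu>'_def)
  then show "ofg_adj n \<mu>' \<mu>" unfolding ofg_adj_def \<mu>'_def by (metis face_flip_face_flip)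
  show "is_height n \<mu>' (flip_height h (i, j))"
    using is_height_face_flip[OF h _ _ _ ext] f unfolding faces_def \<mu>'_def by auto
qed

lemma ofg_adj_sym: "ofg_adj n \<mu> \<nu> \<Longrightarrow> ofg_adj n \<nu> \<mu>"
  unfolding ofg_adj_def flippable_def by (metis face_flip_face_flip)

lemma ofg_path_sym: "(ofg_adj n ^^ k) \<mu> \<nu> \<Longrightarrow> (ofg_adj n ^^ k) \<nu> \<mu>"
proof (induction k arbitrary: \<nu>)
  case (Suc k)
  then show ?case using ofg_adj_sym by (metis relpowp_Suc_E relpowp_Suc_I2)
qed simp

section \<open>Flip distance and height distance\<close>

definition height_dist :: "nat \<Rightarrow> (nat \<times> nat \<Rightarrow> int) \<Rightarrow> (nat \<times> nat \<Rightarrow> int) \<Rightarrow> int" where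
  "height_dist n h1 h2 = (\<Sum>v\<in>dual_vertices n. \<bar>h1 v - h2 v\<bar>)"

lemma height_dist_sym: "height_dist n h1 h2 = height_dist n h2 h1"
  unfolding height_dist_def by (simp add: abs_minus_commute)

lemma height_dist_update:
  assumes "v \<in> dual_vertices n" "\<And>w. w \<noteq> v \<Longrightarrow> h' w = h w"
  shows "height_dist n h' g - height_dist n h g = \<bar>h' v - g v\<bar> - \<bar>h v - g v\<bar>"
  unfolding height_dist_def using assms by (intro sum_diff_eq_single) auto

lemma height_dist_le_flip:
  assumes mv: "mv_assignment n \<mu>" and h: "is_height n \<mu> h" and v: "(i, j) \<in> dual_vertices n"
  shows "height_dist n h g \<le> height_dist n (flip_height h (i, j)) g + 2"
proof -
  let ?h = "flip_height h (i, j)"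
  have "i \<in> {1, 2}" "1 \<le> j" "j \<le> n" using v unfolding dual_vertices_def by auto
  then have "\<bar>h (3 - i, j) - h (i, j)\<bar> = 1"
    using height_step_column[OF mv h] by (auto simp: abs_minus_commute)
  then have "\<bar>?h (i, j) - h (i, j)\<bar> = 2" using flip_height_diff[of h "(i, j)" "(i, j)"] by simp
  moreover have "height_dist n ?h g - height_dist n h g = \<bar>?h (i, j) - g (i, j)\<bar> - \<bar>h (i, j) - g (i, j)\<bar>"
    by (rule height_dist_update[OF v]) (simp add: flip_height_def)
  moreover have "\<bar>h (i, j) - g (i, j)\<bar> \<le> \<bar>?h (i, j) - g (i, j)\<bar> + \<bar>?h (i, j) - h (i, j)\<bar>"
    by arith
  ultimately show ?thesis by linarith
qed

lemma height_dist_le_path_length: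
  assumes "(ofg_adj n ^^ k) \<mu>1 \<mu>2" "locally_valid n \<mu>1" "is_height n \<mu>1 h1" "is_height n \<mu>2 h2"
  shows "\<exists>c. even (h1 (1, 1) - h2 (1, 1) - c) \<and> height_dist n h1 (\<lambda>v. h2 v + c) \<le> 2 * int k"
  using assms
proof (induction k arbitrary: \<mu>1 h1)
  case 0
  then have "is_height n \<mu>1 h2" by simp
  then have "h1 v - (h2 v + (h1 (1, 1) - h2 (1, 1))) = 0" if "v \<in> dual_vertices n" for v
    using is_height_unique[OF \<open>is_height n \<mu>1 h2\<close> "0.prems"(3) that] by simp
  then have "height_dist n h1 (\<lambda>v. h2 v + (h1 (1, 1) - h2 (1, 1))) = 0"
    unfolding height_dist_def by simp
  then show ?case by (intro exI[of _ "h1 (1, 1) - h2 (1, 1)"]) simp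
next
  case (Suc k)
  obtain \<mu>' where "ofg_adj n \<mu>1 \<mu>'" and path: "(ofg_adj n ^^ k) \<mu>' \<mu>2"
    using relpowp_Suc_D2[OF Suc.prems(1)] by auto
  then obtain i j where fl: "flippable n \<mu>1 (i, j)" and \<mu>': "\<mu>' = face_flip n (i, j) \<mu>1"
    unfolding ofg_adj_def by auto
  then have f: "(i, j) \<in> faces n" unfolding flippable_def by auto
  then have ij: "(i, j) \<in> dual_vertices n" using faces_eq_dual_vertices by simp
  have ext: "local_extremum n h1 (i, j)" using flippable_iff_local_extremum[OF Suc.prems(2,3) f] fl ..
  note flip = ofg_adj_flip_local_extremum[OF Suc.prems(2,3) f ext, folded \<mu>']
  let ?h = "flip_height h1 (i, j)"
  obtain c where c: "even (?h (1, 1) - h2 (1, 1) - c)" "height_dist n ?h (\<lambda>v. h2 v + c) \<le> 2 * int k"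
    using Suc.IH[OF path flip(3,4) Suc.prems(4)] by auto
  have "mv_assignment n \<mu>1" using Suc.prems(2) unfolding locally_valid_def by simp
  from height_dist_le_flip[OF this Suc.prems(3) ij, of "\<lambda>v. h2 v + c"] c(2)
  have "height_dist n h1 (\<lambda>v. h2 v + c) \<le> 2 * int (Suc k)" by simp
  moreover have "even (h1 (1, 1) - h2 (1, 1) - c)"
  proof -
    have "even (?h (1, 1) - h1 (1, 1))" using flip_height_diff[of h1 "(i, j)" "(1, 1)"] by simp
    moreover have "h1 (1, 1) - h2 (1, 1) - c = (?h (1, 1) - h2 (1, 1) - c) - (?h (1, 1) - h1 (1, 1))"
      by simp
    ultimately show ?thesis using c(1) by (metis dvd_diff)
  qed
  ultimately show ?case by blast
qed

text \<open>At a vertex where \<open>h1 - h2\<close> is maximal, and among those \<open>h1\<close> is maximal,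
  every neighbour lies one below in \<open>h1\<close>.\<close>
lemma exists_local_extremum_above:
  assumes mv1: "mv_assignment n \<mu>1" and h1: "is_height n \<mu>1 h1"
    and mv2: "mv_assignment n \<mu>2" and h2: "is_height n \<mu>2 h2"
    and even: "\<forall>v\<in>dual_vertices n. even (h1 v - h2 v)" and above: "\<exists>v\<in>dual_vertices n. h2 v < h1 v"
  obtains v where "v \<in> dual_vertices n" "local_extremum n h1 v" "h2 v + 2 \<le> h1 v"
    "flip_height h1 v v = h1 v - 2"
proof -
  obtain v where v: "v \<in> dual_vertices n"
    and max: "\<And>w. w \<in> dual_vertices n \<Longrightarrow> h1 w - h2 w \<le> h1 v - h2 v"
    and lex: "\<And>w. w \<in> dual_vertices n \<Longrightarrow> h1 w - h2 w = h1 v - h2 v \<Longrightarrow> h1 w \<le> h1 v"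
    using finite_obtains_lex_max[OF finite_dual_vertices, of n "\<lambda>w. h1 w - h2 w" h1] above by auto
  have gap: "h2 v + 2 \<le> h1 v"
  proof -
    obtain w where "w \<in> dual_vertices n" "h2 w < h1 w" using above by auto
    then have "0 < h1 v - h2 v" using max by fastforce
    moreover have "even (h1 v - h2 v)" using even v by auto
    ultimately show ?thesis by presburger
  qed
  have below: "h1 u = h1 v - 1" if "dual_adj n v u" for u
  proof (rule ccontr)
    have u: "u \<in> dual_vertices n" using that unfolding dual_adj_def by auto
    have "\<bar>h1 v - h1 u\<bar> = 1" "\<bar>h2 v - h2 u\<bar> = 1"
      using height_adjacent[OF mv1 h1 that] height_adjacent[OF mv2 h2 that] by auto
    moreover assume "h1 u \<noteq> h1 v - 1"
    ultimately have "h1 u = h1 v + 1" "h1 u - h2 u = h1 v - h2 v" using max[OF u] by auto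
    then show False using lex[OF u] by simp
  qed
  obtain i j where ij: "v = (i, j)" "i \<in> {1, 2}" "j \<le> n"
    using v unfolding dual_vertices_def by auto
  then have "dual_adj n v (3 - i, j)" using v unfolding dual_adj_def dual_vertices_def by auto
  then have "flip_height h1 v v = h1 v - 2" using below unfolding flip_height_def ij(1) by simp
  moreover have "local_extremum n h1 v" using local_extremum_if_neighbours_eq[OF v below] .
  ultimately show ?thesis using that v gap by blast
qed

lemma exists_flip_decreasing_dist:
  assumes lv1: "locally_valid n \<mu>1" and h1: "is_height n \<mu>1 h1"
    and lv2: "locally_valid n \<mu>2" and h2: "is_height n \<mu>2 h2"
    and even: "\<forall>v\<in>dual_vertices n. even (h1 v - h2 v)" and above: "\<exists>v\<in>dual_vertices n. h2 v < h1 v"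
  obtains \<mu>1' h1' where "ofg_adj n \<mu>1 \<mu>1'" "locally_valid n \<mu>1'" "is_height n \<mu>1' h1'"
    "\<forall>v\<in>dual_vertices n. even (h1' v - h2 v)" "height_dist n h1' h2 = height_dist n h1 h2 - 2"
proof -
  have mv: "mv_assignment n \<mu>1" "mv_assignment n \<mu>2" using lv1 lv2 locally_valid_def by auto
  obtain v where v: "v \<in> dual_vertices n" and ext: "local_extremum n h1 v" and gap: "h2 v + 2 \<le> h1 v"
    and step: "flip_height h1 v v = h1 v - 2"
    using exists_local_extremum_above[OF mv(1) h1 mv(2) h2 even above] .
  obtain i j where ij: "v = (i, j)" by force
  have "(i, j) \<in> faces n" using v ij faces_eq_dual_vertices by simp
  note flip = ofg_adj_flip_local_extremum[OF lv1 h1 this ext[unfolded ij]]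
  show ?thesis
  proof (rule that[OF flip(1,3,4)])
    show "\<forall>w\<in>dual_vertices n. even (flip_height h1 (i, j) w - h2 w)"
      using even step ij unfolding flip_height_def by auto
    have "height_dist n (flip_height h1 v) h2 - height_dist n h1 h2
        = \<bar>flip_height h1 v v - h2 v\<bar> - \<bar>h1 v - h2 v\<bar>"
      by (rule height_dist_update[OF v]) (simp add: flip_height_def)
    then show "height_dist n (flip_height h1 (i, j)) h2 = height_dist n h1 h2 - 2"
      using step gap ij by simp
  qed
qed

lemma ofg_path_if_height_dist:
  assumes "1 \<le> n" "locally_valid n \<mu>1" "locally_valid n \<mu>2" "is_height n \<mu>1 h1" "is_height n \<mu>2 h2"
    "\<forall>v\<in>dual_vertices n. even (h1 v - h2 v)" "height_dist n h1 h2 = 2 * int N"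
  shows "(ofg_adj n ^^ N) \<mu>1 \<mu>2"
  using assms(2-)
proof (induction N arbitrary: \<mu>1 \<mu>2 h1 h2)
  case 0
  have "\<forall>v\<in>dual_vertices n. h1 v = h2 v"
    using "0.prems"(6) unfolding height_dist_def by (simp add: sum_nonneg_eq_0_iff)
  then show ?case
    using assignment_eq_if_same_height "0.prems"(1-4) assms(1) unfolding locally_valid_def by auto
next
  case (Suc N)
  have "\<exists>v\<in>dual_vertices n. h1 v \<noteq> h2 v"
  proof (rule ccontr)
    assume "\<not> ?thesis"
    then have "height_dist n h1 h2 = 0" unfolding height_dist_def by simp
    then show False using Suc.prems(6) by simp
  qed
  then consider "\<exists>v\<in>dual_vertices n. h2 v < h1 v" | "\<exists>v\<in>dual_vertices n. h1 v < h2 v"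
    by (meson linorder_neqE)
  then show ?case
  proof cases
    case 1
    obtain \<mu>1' h1' where "ofg_adj n \<mu>1 \<mu>1'" "locally_valid n \<mu>1'" "is_height n \<mu>1' h1'"
      "\<forall>v\<in>dual_vertices n. even (h1' v - h2 v)" "height_dist n h1' h2 = height_dist n h1 h2 - 2"
      using exists_flip_decreasing_dist[OF Suc.prems(1,3,2,4,5) 1] .
    moreover from this have "(ofg_adj n ^^ N) \<mu>1' \<mu>2" using Suc.IH[of \<mu>1' \<mu>2 h1' h2] Suc.prems by auto
    ultimately show ?thesis by (metis relpowp_Suc_I2)
  next
    case 2
    have even: "\<forall>v\<in>dual_vertices n. even (h2 v - h1 v)"
      using Suc.prems(5) by (metis dvd_minus_iff minus_diff_eq)
    obtain \<mu>2' h2' where "ofg_adj n \<mu>2 \<mu>2'" "locally_valid n \<mu>2'" "is_height n \<mu>2' h2'"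
      "\<forall>v\<in>dual_vertices n. even (h2' v - h1 v)" "height_dist n h2' h1 = height_dist n h2 h1 - 2"
      using exists_flip_decreasing_dist[OF Suc.prems(2,4,1,3) even 2] .
    moreover from this have "(ofg_adj n ^^ N) \<mu>2' \<mu>1"
      using Suc.IH[of \<mu>2' \<mu>1 h2' h1] Suc.prems by (auto simp: height_dist_sym)
    ultimately have "(ofg_adj n ^^ Suc N) \<mu>2 \<mu>1" by (metis relpowp_Suc_I2)
    then show ?thesis by (rule ofg_path_sym)
  qed
qed

lemma exists_shift_height_dist_le:
  assumes mv: "mv_assignment n \<mu>1" "mv_assignment n \<mu>2" and h: "is_height n \<mu>1 h1" "is_height n \<mu>2 h2"
    and even: "even (h1 (1, 1) - h2 (1, 1))"
  shows "\<exists>m. height_dist n h1 (\<lambda>v. h2 v + 2 * m) \<le> 2 * int ((n\<^sup>2 + 1) div 2)"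
proof -
  define d where "d v = (h1 v - h2 v) div 2" for v
  have d: "h1 v - h2 v = 2 * d v" if "v \<in> dual_vertices n" for v
    using even_height_diff[OF mv(1) h(1) mv(2) h(2) even that] unfolding d_def by simp
  have adj: "\<bar>d u - d v\<bar> \<le> 1" if "dual_adj n u v" for u v
  proof -
    have "h1 u - h2 u = 2 * d u" "h1 v - h2 v = 2 * d v" using d that unfolding dual_adj_def by auto
    moreover have "\<bar>h1 u - h1 v\<bar> = 1" "\<bar>h2 u - h2 v\<bar> = 1"
      using height_adjacent[OF mv(1) h(1) that] height_adjacent[OF mv(2) h(2) that] by auto
    ultimately show ?thesis by arith
  qed
  have row: "\<bar>d (i, Suc j) - d (i, j)\<bar> \<le> 1" if "i \<in> {1, 2}" "1 \<le> j" "j < n" for i j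
    using adj[of "(i, Suc j)" "(i, j)"] that unfolding dual_adj_def dual_vertices_def by auto
  have column: "\<bar>d (1, j) - d (2, j)\<bar> \<le> 1" if "1 \<le> j" "j \<le> n" for j
    using adj[of "(1, j)" "(2, j)"] that unfolding dual_adj_def dual_vertices_def by auto
  define s where "s j = d (1, j) + d (2, j)" for j
  have "\<bar>s (Suc j) - s j\<bar> \<le> 2" if "1 \<le> j" "j < n" for j
    using row[of 1 j] row[of 2 j] that unfolding s_def by auto
  then obtain m where m: "(\<Sum>j=1..n. \<bar>s j - 2 * m\<bar>) \<le> int ((n\<^sup>2 + 1) div 2)"
    using exists_even_center by blast
  have "height_dist n h1 (\<lambda>v. h2 v + 2 * m) = 2 * (\<Sum>v\<in>dual_vertices n. \<bar>d v - m\<bar>)"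
    unfolding height_dist_def sum_distrib_left
  proof (intro sum.cong refl)
    fix v assume "v \<in> dual_vertices n"
    then have "h1 v - (h2 v + 2 * m) = 2 * (d v - m)" using d by (simp add: algebra_simps)
    then show "\<bar>h1 v - (h2 v + 2 * m)\<bar> = 2 * \<bar>d v - m\<bar>" by (simp only: abs_mult abs_numeral)
  qed
  also have "\<dots> = 2 * (\<Sum>j=1..n. \<bar>s j - 2 * m\<bar>)"
    unfolding s_def using column by (simp add: sum_dual_vertices_abs_by_columns)
  finally show ?thesis using m by (intro exI[of _ m]) simp
qed

lemma ceiling_half_square: "\<lceil>real (n\<^sup>2) / 2\<rceil> = int ((n\<^sup>2 + 1) div 2)"
proof (cases "even n")
  case True
  then obtain k where "n = 2 * k" by blast
  then have "real (n\<^sup>2) / 2 = of_int (int (2 * k\<^sup>2))" "(n\<^sup>2 + 1) div 2 = 2 * k\<^sup>2"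
    by (simp_all add: power2_eq_square)
  then show ?thesis by (metis ceiling_of_int)
next
  case False
  then obtain k where "n = 2 * k + 1" by (blast elim: oddE)
  then have "real (n\<^sup>2) / 2 = real (2 * k\<^sup>2 + 2 * k) + 1 / 2" "(n\<^sup>2 + 1) div 2 = 2 * k\<^sup>2 + 2 * k + 1"
    by (simp_all add: power2_eq_square algebra_simps)
  then show ?thesis by (simp add: ceiling_unique)
qed

lemma ofg_path_length_le:
  assumes n: "1 \<le> n" and lv: "locally_valid n \<mu>1" "locally_valid n \<mu>2"
  shows "\<exists>N \<le> (n\<^sup>2 + 1) div 2. (ofg_adj n ^^ N) \<mu>1 \<mu>2"
proof -
  have mv: "mv_assignment n \<mu>1" "mv_assignment n \<mu>2" using lv locally_valid_def by auto
  note h = is_height_height_of[OF lv(1)] is_height_height_of[OF lv(2)]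
  have "even (height_of \<mu>1 (1, 1) - height_of \<mu>2 (1, 1))" by (simp add: height_of_def)
  then obtain m
    where m: "height_dist n (height_of \<mu>1) (\<lambda>v. height_of \<mu>2 v + 2 * m) \<le> 2 * int ((n\<^sup>2 + 1) div 2)"
    using exists_shift_height_dist_le[OF mv h] by blast
  define h2 where "h2 v = height_of \<mu>2 v + 2 * m" for v
  have h2: "is_height n \<mu>2 h2" unfolding h2_def using is_height_shift[OF h(2)] .
  have "even (height_of \<mu>1 (1, 1) - h2 (1, 1))" unfolding h2_def height_of_def by simp
  then have even: "\<forall>v\<in>dual_vertices n. even (height_of \<mu>1 v - h2 v)"
    using even_height_diff[OF mv(1) h(1) mv(2) h2] by blast
  then have "even (height_dist n (height_of \<mu>1) h2)" unfolding height_dist_def by (auto intro: dvd_sum)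
  moreover have "0 \<le> height_dist n (height_of \<mu>1) h2" unfolding height_dist_def by simp
  ultimately obtain N where N: "height_dist n (height_of \<mu>1) h2 = 2 * int N"
    by (metis evenE nonneg_int_cases zero_le_mult_iff not_numeral_le_zero)
  have "(ofg_adj n ^^ N) \<mu>1 \<mu>2" using ofg_path_if_height_dist[OF n lv h(1) h2 even N] .
  moreover have "N \<le> (n\<^sup>2 + 1) div 2" using m N unfolding h2_def by simp
  ultimately show ?thesis by blast
qed

section \<open>Colorings\<close>

lemma walk_weight_snoc:
  "walk_weight g (xs @ [y]) = walk_weight g xs + (if xs = [] then 0 else edge_weight g (last xs) y)"
proof (induction xs)
  case (Cons x xs)
  then show ?case by (cases xs) auto
qed simp

lemma edge_weight_mod3:
  assumes "\<bar>h b - h a\<bar> = 1"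
  shows "edge_weight (\<lambda>v. h v mod 3) a b = h b - h a"
proof -
  have "(h b mod 3 - h a mod 3) mod 3 = (h b - h a) mod 3" by (simp add: mod_diff_eq)
  moreover have "h b - h a = 1 \<or> h b - h a = -1" using assms by auto
  ultimately show ?thesis unfolding edge_weight_def by auto
qed

lemma walk_weight_path_from_v11:
  assumes mv: "mv_assignment n \<mu>" and h: "is_height n \<mu> h" and v: "v \<in> dual_vertices n"
  shows "walk_weight (\<lambda>v. h v mod 3) (path_from_v11 v) = h v - h (1, 1)"
proof -
  let ?g = "\<lambda>v. h v mod 3" and ?row = "\<lambda>j. map (\<lambda>k. (1::nat, k)) [1..<j + 1]"
  have last_row: "?row j \<noteq> []" "last (?row j) = (1, j)" if "1 \<le> j" for j
    using that by (auto simp: last_map)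
  have row: "walk_weight ?g (?row j) = h (1, j) - h (1, 1)" if "1 \<le> j" "j \<le> n" for j
    using that
  proof (induction j rule: nat_induct_at_least)
    case (Suc j)
    have "?row (Suc j) = ?row j @ [(1, j + 1)]" by simp
    moreover have "edge_weight ?g (1, j) (1, j + 1) = h (1, j + 1) - h (1, j)"
      using height_step_row[OF mv h, of 1 j] Suc by (intro edge_weight_mod3) auto
    ultimately show ?case using Suc last_row[OF Suc.hyps] by (simp only: walk_weight_snoc) simp
  qed simp
  obtain i j where ij: "v = (i, j)" "i \<in> {1, 2}" "1 \<le> j" "j \<le> n" using v unfolding dual_vertices_def by auto
  show ?thesis
  proof (cases "i = 1")
    case True
    then show ?thesis using row[OF ij(3,4)] ij unfolding path_from_v11_def by simp
  next
    case False
    then have "path_from_v11 v = ?row j @ [(2, j)]" "i = 2" using ij unfolding path_from_v11_def by auto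
    moreover have "edge_weight ?g (1, j) (2, j) = h (2, j) - h (1, j)"
      using height_step_column[OF mv h ij(3,4)] by (rule edge_weight_mod3)
    ultimately show ?thesis using row[OF ij(3,4)] last_row[OF ij(3)] ij(1) by (simp only: walk_weight_snoc) simp
  qed
qed

lemma proper_3coloring_height_mod3:
  assumes "mv_assignment n \<mu>" "is_height n \<mu> h"
  shows "proper_3coloring n (\<lambda>v. h v mod 3)"
proof -
  have "h u mod 3 \<noteq> h v mod 3" if "dual_adj n u v" for u v
  proof
    assume "h u mod 3 = h v mod 3"
    then have "(h u - h v) mod 3 = 0" by (simp add: mod_diff_eq[symmetric])
    moreover have "h u - h v = 1 \<or> h u - h v = -1" using height_adjacent[OF assms that] by auto
    ultimately show False by auto
  qed
  moreover have "x mod 3 \<in> {0, 1, 2}" for x :: int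
    using pos_mod_sign[of 3 x] pos_mod_bound[of 3 x] by auto
  ultimately show ?thesis unfolding proper_3coloring_def by blast
qed

lemma corresponds_height_mod3:
  assumes h: "is_height n \<mu> h" and "1 \<le> n"
  shows "corresponds n (\<lambda>v. h v mod 3) \<mu>"
proof -
  have cong: "[a mod 3 = b mod 3 + c] (mod 3)" if "a = b + c" for a b c :: int
    using that unfolding cong_def by (simp add: mod_add_left_eq)
  show ?thesis unfolding corresponds_def
  proof (intro conjI ballI)
    fix j assume "j \<in> {1..n - 1}"
    then show "[h (1, j + 1) mod 3 = h (1, j) mod 3 + \<mu> (3 * j - 1)] (mod 3)"
      using is_heightD(1)[OF h, of j] by (intro cong) auto
  next
    show "[h (2, n) mod 3 = h (1, n) mod 3 + \<mu> (3 * n - 3)] (mod 3)"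
      using is_heightD(4)[OF h, of n] \<open>1 \<le> n\<close> by (intro cong) auto
  next
    fix j assume j: "j \<in> {2..n}"
    then have "3 * j - 2 = 3 * (j - 1) + 1" "j - 1 + 1 = j" by auto
    then show "[h (2, j - 1) mod 3 = h (2, j) mod 3 + \<mu> (3 * j - 2)] (mod 3)"
      using is_heightD(2)[OF h, of "j - 1"] j by (intro cong) auto
  qed
qed

lemma rel_height_height_mod3:
  assumes "mv_assignment n \<mu>1" "is_height n \<mu>1 h1" "mv_assignment n \<mu>2" "is_height n \<mu>2 h2"
    and "v \<in> dual_vertices n"
  shows "rel_height (\<lambda>v. h1 v mod 3) (\<lambda>v. h2 v mod 3) v = (h2 v - h2 (1, 1)) - (h1 v - h1 (1, 1))"
  unfolding rel_height_def using walk_weight_path_from_v11 assms by simp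

lemma exists_colorings_close:
  assumes n: "1 \<le> n" and lv: "locally_valid n \<mu>1" "locally_valid n \<mu>2"
  shows "\<exists>\<gamma> \<beta>. proper_3coloring n \<gamma> \<and> proper_3coloring n \<beta> \<and>
           corresponds n \<gamma> \<mu>1 \<and> corresponds n \<beta> \<mu>2 \<and>
           (\<exists>H::int. even H \<and>
              real_of_int (\<Sum>v\<in>dual_vertices n. \<bar>H + rel_height \<gamma> \<beta> v\<bar>) / 2 \<le> of_int \<lceil>real (n\<^sup>2) / 2\<rceil>)"
proof -
  have mv: "mv_assignment n \<mu>1" "mv_assignment n \<mu>2" using lv locally_valid_def by auto
  define h1 h2 where "h1 = height_of \<mu>1" and "h2 = height_of \<mu>2"
  have h: "is_height n \<mu>1 h1" "is_height n \<mu>2 h2" unfolding h1_def h2_def using lv by (auto intro: is_height_height_of)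
  have base: "h1 (1, 1) = 0" "h2 (1, 1) = 0" unfolding h1_def h2_def height_of_def by simp_all
  then obtain m where m: "height_dist n h1 (\<lambda>v. h2 v + 2 * m) \<le> 2 * int ((n\<^sup>2 + 1) div 2)"
    using exists_shift_height_dist_le[OF mv h] by auto
  define \<gamma> \<beta> where "\<gamma> v = h1 v mod 3" and "\<beta> v = h2 v mod 3" for v
  have "(\<Sum>v\<in>dual_vertices n. \<bar>2 * m + rel_height \<gamma> \<beta> v\<bar>) = height_dist n h1 (\<lambda>v. h2 v + 2 * m)"
    unfolding height_dist_def
  proof (intro sum.cong refl)
    fix v assume "v \<in> dual_vertices n"
    then have "2 * m + rel_height \<gamma> \<beta> v = - (h1 v - (h2 v + 2 * m))"
      using rel_height_height_mod3[OF mv(1) h(1) mv(2) h(2)] base unfolding \<gamma>_def \<beta>_def by simp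
    then show "\<bar>2 * m + rel_height \<gamma> \<beta> v\<bar> = \<bar>h1 v - (h2 v + 2 * m)\<bar>" by (simp only: abs_minus_cancel)
  qed
  then have "real_of_int (\<Sum>v\<in>dual_vertices n. \<bar>2 * m + rel_height \<gamma> \<beta> v\<bar>) / 2 \<le> of_int \<lceil>real (n\<^sup>2) / 2\<rceil>"
    using m unfolding ceiling_half_square by simp
  moreover have "proper_3coloring n \<gamma>" "proper_3coloring n \<beta>"
    unfolding \<gamma>_def \<beta>_def using proper_3coloring_height_mod3 mv h by auto
  moreover have "corresponds n \<gamma> \<mu>1" "corresponds n \<beta> \<mu>2"
    unfolding \<gamma>_def \<beta>_def using corresponds_height_mod3 h n by auto
  ultimately show ?thesis by (intro exI[of _ \<gamma>] exI[of _ \<beta>]) (auto intro!: exI[of _ "2 * m"])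
qed

section \<open>Assignments of degree two\<close>

lemma face_flip_inj:
  assumes n: "2 \<le> n" and mv: "mv_assignment n \<mu>" and f: "\<alpha> \<in> faces n" "\<beta> \<in> faces n" "\<alpha> \<noteq> \<beta>"
  shows "face_flip n \<alpha> \<mu> \<noteq> face_flip n \<beta> \<mu>"
proof -
  obtain i j i' j' where ij: "\<alpha> = (i, j)" "i \<in> {1, 2}" "1 \<le> j" "j \<le> n"
    and ij': "\<beta> = (i', j')" "i' \<in> {1, 2}" "1 \<le> j'" "j' \<le> n"
    using f(1,2) unfolding faces_def by auto
  have "\<exists>c\<in>creases n. (c \<in> face_border n \<alpha>) \<noteq> (c \<in> face_border n \<beta>)"
  proof (cases "j = j'")
    case False
    then show ?thesis using face_border_middle[OF ij(3) ij(2,3)] face_border_middle[OF ij(3) ij'(2,3)]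
        crease_between_rows[OF ij(3,4)] ij ij' by (intro bexI[of _ "3 * j - 3"]) auto
  next
    case True
    then have "i \<noteq> i'" using f ij ij' by auto
    define k where "k = (if 2 \<le> j then j - 1 else j)"
    have k: "1 \<le> k" "k < n" "j = k \<or> j = k + 1" using n ij unfolding k_def by auto
    show ?thesis using face_border_upper[OF k(1,2) ij(2,3)] face_border_upper[OF k(1,2) ij'(2,3)]
        creases_at_vertex(2)[OF k(1,2)] \<open>i \<noteq> i'\<close> ij ij' True k(3) by (intro bexI[of _ "3 * k - 1"]) auto
  qed
  then obtain c where "c \<in> creases n" "(c \<in> face_border n \<alpha>) \<noteq> (c \<in> face_border n \<beta>)" by auto
  moreover from this have "\<mu> c \<noteq> 0" using mv_assignment_values[OF mv] by fastforce
  ultimately have "face_flip n \<alpha> \<mu> c \<noteq> face_flip n \<beta> \<mu> c" unfolding face_flip_def by auto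
  then show ?thesis by metis
qed

lemma ofg_degree_eq_card_flippable:
  assumes "2 \<le> n" "mv_assignment n \<mu>"
  shows "ofg_degree n \<mu> = card {\<alpha>. flippable n \<mu> \<alpha>}"
proof -
  have "{\<nu>. ofg_adj n \<mu> \<nu>} = (\<lambda>\<alpha>. face_flip n \<alpha> \<mu>) ` {\<alpha>. flippable n \<mu> \<alpha>}"
    unfolding ofg_adj_def by auto
  moreover have "inj_on (\<lambda>\<alpha>. face_flip n \<alpha> \<mu>) {\<alpha>. flippable n \<mu> \<alpha>}"
    by (rule inj_onI) (use face_flip_inj[OF assms] in \<open>auto simp: flippable_def\<close>)
  ultimately show ?thesis unfolding ofg_degree_def by (simp add: card_image)
qed

lemma mv_assignment_neg: "mv_assignment n \<mu> \<Longrightarrow> mv_assignment n (\<lambda>c. - \<mu> c)"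
  unfolding mv_assignment_def by auto

lemma locally_valid_neg: "locally_valid n \<mu> \<Longrightarrow> locally_valid n (\<lambda>c. - \<mu> c)"
  using locally_valid_if_is_height[OF mv_assignment_neg is_height_neg[OF is_height_height_of]]
  unfolding locally_valid_def by blast

lemma flippable_neg_iff:
  assumes lv: "locally_valid n \<mu>"
  shows "flippable n (\<lambda>c. - \<mu> c) \<alpha> \<longleftrightarrow> flippable n \<mu> \<alpha>"
proof (cases "\<alpha> \<in> faces n")
  case True
  obtain i j where \<alpha>: "\<alpha> = (i, j)" by force
  note h = is_height_height_of[OF lv]
  show ?thesis
    using flippable_iff_local_extremum[OF lv h] flippable_iff_local_extremum[OF locally_valid_neg[OF lv] is_height_neg[OF h]]
      local_extremum_neg True \<alpha> by metis
qed (simp add: flippable_def)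

lemma ofg_degree_neg:
  assumes "2 \<le> n" "locally_valid n \<mu>"
  shows "ofg_degree n (\<lambda>c. - \<mu> c) = ofg_degree n \<mu>"
  using assms flippable_neg_iff[OF assms(2)]
  by (simp add: ofg_degree_eq_card_flippable mv_assignment_neg locally_valid_def)

definition column_top :: "(nat \<times> nat \<Rightarrow> int) \<Rightarrow> nat \<Rightarrow> nat \<times> nat" where
  "column_top h j = (if h (2, j) < h (1, j) then 1 else 2, j)"

lemma local_extremum_column_top:
  assumes mv: "mv_assignment n \<mu>" and h: "is_height n \<mu> h"
    and max: "seq_local_max n (\<lambda>j. h (1, j) + h (2, j)) j"
  shows "local_extremum n h (column_top h j)"
proof -
  define i where "i = fst (column_top h j)"
  have j: "1 \<le> j" "j \<le> n" using max unfolding seq_local_max_def by auto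
  have i: "i \<in> {1, 2}" "column_top h j = (i, j)" unfolding i_def column_top_def by auto
  have top: "h (i, j) = h (3 - i, j) + 1"
    using height_step_column[OF mv h j] unfolding i_def column_top_def by auto
  have sum: "h (1, j') + h (2, j') = h (i, j') + h (3 - i, j')" for j' using i(1) by auto
  \<comment> \<open>Climbing from the top of a column would raise the column sum above its local maximum.\<close>
  have nb: "h (i, j') = h (3 - i, j)"
    if "1 \<le> j'" "j' \<le> n" "\<bar>h (i, j') - h (i, j)\<bar> = 1" "\<bar>h (3 - i, j') - h (3 - i, j)\<bar> = 1"
      "h (1, j') + h (2, j') \<le> h (1, j) + h (2, j)" for j'
  proof -
    have "\<bar>h (3 - i, j') - h (i, j')\<bar> = 1"
      using height_step_column[OF mv h that(1,2)] i(1) by (auto simp: abs_minus_commute)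
    then show ?thesis using that(3-5) top unfolding sum by arith
  qed
  have "h (i, j - 1) = h (3 - i, j)" if "2 \<le> j"
  proof -
    have "j - 1 + 1 = j" using that by simp
    then show ?thesis using nb[of "j - 1"] height_step_row[OF mv h i(1), of "j - 1"]
        height_step_row[OF mv h, of "3 - i" "j - 1"] i(1) that j max
      unfolding seq_local_max_def by (auto simp: abs_minus_commute)
  qed
  moreover have "h (i, j + 1) = h (3 - i, j)" if "j < n"
    using nb[of "j + 1"] height_step_row[OF mv h i(1) j(1) that]
      height_step_row[OF mv h _ j(1) that, of "3 - i"] i(1) that max
    unfolding seq_local_max_def by auto
  ultimately show ?thesis unfolding local_extremum_def i(2) by auto
qed

lemma local_extremum_column_bottom:
  assumes mv: "mv_assignment n \<mu>" and h: "is_height n \<mu> h"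
    and min: "seq_local_max n (\<lambda>j. - (h (1, j) + h (2, j))) j"
  shows "local_extremum n h (column_top (\<lambda>v. - h v) j)"
  using local_extremum_column_top[OF mv_assignment_neg[OF mv] is_height_neg[OF h]] min local_extremum_neg
  by simp

lemma card_seq_local_extrema_le_card_flippable:
  assumes lv: "locally_valid n \<mu>" and h: "is_height n \<mu> h"
  defines "s \<equiv> \<lambda>j. h (1, j) + h (2, j)"
  shows "card {j. seq_local_max n s j} + card {j. seq_local_max n (\<lambda>j. - s j) j} \<le> card {\<alpha>. flippable n \<mu> \<alpha>}"
proof -
  have mv: "mv_assignment n \<mu>" using lv locally_valid_def by auto
  let ?M = "{j. seq_local_max n s j}" and ?m = "{j. seq_local_max n (\<lambda>j. - s j) j}"
  let ?top = "column_top h" and ?bot = "column_top (\<lambda>v. - h v)"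
  have column: "h (1, j) \<noteq> h (2, j)" if "j \<in> ?M \<union> ?m" for j
    using height_step_column[of n \<mu> h j] mv h that unfolding seq_local_max_def by auto
  have sub: "?top ` ?M \<union> ?bot ` ?m \<subseteq> {\<alpha>. flippable n \<mu> \<alpha>}"
  proof -
    have "flippable n \<mu> (column_top g j)" if "local_extremum n h (column_top g j)" "j \<in> {1..n}" for g j
      using flippable_iff_local_extremum[OF lv h, of "fst (column_top g j)" j] that
      unfolding column_top_def faces_def by auto
    then show ?thesis
      using local_extremum_column_top[OF mv h] local_extremum_column_bottom[OF mv h]
      unfolding s_def seq_local_max_def by auto
  qed
  have fin: "finite {\<alpha>. flippable n \<mu> \<alpha>}"
    by (rule finite_subset[of _ "faces n"]) (auto simp: flippable_def faces_def)
  have "?top ` ?M \<inter> ?bot ` ?m = {}"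
    using column unfolding column_top_def by (auto split: if_splits)
  moreover have "inj_on ?top ?M" "inj_on ?bot ?m" unfolding column_top_def by (auto intro: inj_onI)
  moreover have "finite ?M" "finite ?m" by (rule finite_subset[of _ "{1..n}"], auto simp: seq_local_max_def)+
  ultimately have "card (?top ` ?M \<union> ?bot ` ?m) = card ?M + card ?m"
    by (simp add: card_Un_disjoint card_image)
  then show ?thesis using card_mono[OF fin sub] by simp
qed

lemma degree_two_column_sums:
  assumes n: "2 \<le> n" and lv: "locally_valid n \<mu>" and h: "is_height n \<mu> h" and deg: "ofg_degree n \<mu> = 2"
  obtains d where "\<bar>d\<bar> = 2" "\<And>j. 1 \<le> j \<Longrightarrow> j < n \<Longrightarrow> h (1, Suc j) + h (2, Suc j) = h (1, j) + h (2, j) + d"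
proof -
  have mv: "mv_assignment n \<mu>" using lv locally_valid_def by auto
  define s where "s j = h (1, j) + h (2, j)" for j
  have "card {j. seq_local_max n s j} + card {j. seq_local_max n (\<lambda>j. - s j) j} \<le> 2"
    using card_seq_local_extrema_le_card_flippable[OF lv h] deg ofg_degree_eq_card_flippable[OF n mv]
    unfolding s_def by simp
  then have "(\<forall>j\<in>{1..<n}. s j < s (Suc j)) \<or> (\<forall>j\<in>{1..<n}. s (Suc j) < s j)"
  proof (rule contrapos_pp)
    assume "\<not> ?thesis"
    then have "\<exists>j\<in>{1..<n}. s (Suc j) \<le> s j" "\<exists>j\<in>{1..<n}. s j \<le> s (Suc j)" by (auto simp: not_less)
    from three_seq_local_extrema[OF n this] show "\<not> card {j. seq_local_max n s j} + card {j. seq_local_max n (\<lambda>j. - s j) j} \<le> 2"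
      by simp
  qed
  moreover have "s (Suc j) - s j \<in> {-2, 0, 2}" if "1 \<le> j" "j < n" for j
    using height_step_row[OF mv h, of 1 j] height_step_row[OF mv h, of 2 j] that unfolding s_def by auto
  ultimately consider "\<forall>j\<in>{1..<n}. s (Suc j) = s j + 2" | "\<forall>j\<in>{1..<n}. s (Suc j) = s j + (- 2)"
    by fastforce
  then show ?thesis using that[of 2] that[of "-2"] unfolding s_def by cases auto
qed

lemma degree_two_height_spread:
  assumes n: "2 \<le> n" and lv: "locally_valid n \<mu>" and h: "is_height n \<mu> h" and deg: "ofg_degree n \<mu> = 2"
  shows "int ((n\<^sup>2 + 1) div 2) \<le> (\<Sum>v\<in>dual_vertices n. \<bar>h v - m\<bar>)"
proof -
  have mv: "mv_assignment n \<mu>" using lv locally_valid_def by auto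
  have column: "\<bar>h (1, j) - h (2, j)\<bar> \<le> 1" if "1 \<le> j" "j \<le> n" for j
    using height_step_column[OF mv h that] by (simp add: abs_minus_commute)
  obtain d where d: "\<bar>d\<bar> = 2" "\<And>j. 1 \<le> j \<Longrightarrow> j < n \<Longrightarrow> h (1, Suc j) + h (2, Suc j) = h (1, j) + h (2, j) + d"
    using degree_two_column_sums[OF assms] by blast
  have "h (2, 1) = h (1, 1) + 1 \<or> h (2, 1) = h (1, 1) - 1"
    using height_step_column[OF mv h, of 1] n by auto
  then have "odd (h (1, 1) + h (2, 1))" by auto
  then have "int ((n\<^sup>2 + 1) div 2) \<le> (\<Sum>j=1..n. \<bar>h (1, j) + h (2, j) - 2 * m\<bar>)"
    using sum_abs_progression_ge[of n "\<lambda>j. h (1, j) + h (2, j)" d] d by simp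
  also have "\<dots> = (\<Sum>v\<in>dual_vertices n. \<bar>h v - m\<bar>)"
    using sum_dual_vertices_abs_by_columns[of n h m] column by simp
  finally show ?thesis .
qed

lemma ofg_path_length_ge_opposite:
  assumes n: "2 \<le> n" and lv: "locally_valid n \<mu>" and deg: "ofg_degree n \<mu> = 2"
    and path: "(ofg_adj n ^^ k) \<mu> (\<lambda>c. - \<mu> c)"
  shows "(n\<^sup>2 + 1) div 2 \<le> k"
proof -
  define h where "h = height_of \<mu>"
  have h: "is_height n \<mu> h" unfolding h_def using lv by (rule is_height_height_of)
  obtain c where "even (h (1, 1) - - h (1, 1) - c)" and c: "height_dist n h (\<lambda>v. - h v + c) \<le> 2 * int k"
    using height_dist_le_path_length[OF path lv h is_height_neg[OF h]] by auto
  then obtain m where m: "c = 2 * m" by (auto elim!: evenE)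
  have "height_dist n h (\<lambda>v. - h v + c) = 2 * (\<Sum>v\<in>dual_vertices n. \<bar>h v - m\<bar>)"
    unfolding height_dist_def sum_distrib_left m
  proof (intro sum.cong refl)
    fix v
    have "h v - (- h v + 2 * m) = 2 * (h v - m)" by simp
    then show "\<bar>h v - (- h v + 2 * m)\<bar> = 2 * \<bar>h v - m\<bar>" by (simp only: abs_mult abs_numeral)
  qed
  then show ?thesis using c degree_two_height_spread[OF n lv h deg, of m] by simp
qed

lemma ofg_dist_opposite:
  assumes n: "2 \<le> n" and lv: "locally_valid n \<mu>" and deg: "ofg_degree n \<mu> = 2"
  shows "ofg_dist_is n \<mu> (\<lambda>c. - \<mu> c) ((n\<^sup>2 + 1) div 2)"
proof -
  obtain N where N: "N \<le> (n\<^sup>2 + 1) div 2" "(ofg_adj n ^^ N) \<mu> (\<lambda>c. - \<mu> c)"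
    using ofg_path_length_le[OF _ lv locally_valid_neg[OF lv]] n by auto
  moreover have "(n\<^sup>2 + 1) div 2 \<le> N" using ofg_path_length_ge_opposite[OF n lv deg N(2)] .
  ultimately show ?thesis unfolding ofg_dist_is_def
    using ofg_path_length_ge_opposite[OF n lv deg] by (metis le_antisym not_le)
qed

text \<open>The assignment with heights \<open>i + j\<close>.\<close>
definition ascending_assignment :: "nat \<Rightarrow> nat \<Rightarrow> int" where
  "ascending_assignment n c = (if c \<in> creases n then if c mod 3 = 1 then -1 else 1 else 0)"

lemma is_height_ascending_assignment:
  "is_height n (ascending_assignment n) (\<lambda>v. int (fst v) + int (snd v))"
proof -
  have "ascending_assignment n (3 * k - 1) = 1" "ascending_assignment n (3 * k + 1) = -1"
    if "1 \<le> k" "k < n" for k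
  proof -
    have "(3 * k - 1) mod 3 = 2" "(3 * k + 1) mod 3 = 1" using that by (cases k; simp add: mod_Suc)+
    then show "ascending_assignment n (3 * k - 1) = 1" "ascending_assignment n (3 * k + 1) = -1"
      using creases_at_vertex(2,4)[OF that] unfolding ascending_assignment_def by auto
  qed
  moreover have "ascending_assignment n (3 * j - 3) = 1" if "1 \<le> j" "j \<le> n" for j
  proof -
    have "(3 * j - 3) mod 3 = 0" using that by (cases j) simp_all
    then show ?thesis using crease_between_rows[OF that] unfolding ascending_assignment_def by auto
  qed
  ultimately show ?thesis unfolding is_height_def by simp
qed

lemma locally_valid_ascending_assignment: "locally_valid n (ascending_assignment n)"
proof (rule locally_valid_if_is_height)
  show "mv_assignment n (ascending_assignment n)"
    unfolding mv_assignment_def ascending_assignment_def by auto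
qed (rule is_height_ascending_assignment)

lemma ofg_degree_ascending_assignment:
  assumes n: "2 \<le> n"
  shows "ofg_degree n (ascending_assignment n) = 2"
proof -
  let ?\<mu> = "ascending_assignment n"
  have "flippable n ?\<mu> (i, j) \<longleftrightarrow> (i, j) = (1, 1) \<or> (i, j) = (2, n)" for i j
  proof (cases "(i, j) \<in> faces n")
    case True
    then have "i \<in> {1, 2}" "1 \<le> j" "j \<le> n" unfolding faces_def by auto
    then have "local_extremum n (\<lambda>v. int (fst v) + int (snd v)) (i, j) \<longleftrightarrow> (i, j) = (1, 1) \<or> (i, j) = (2, n)"
      using n unfolding local_extremum_def by auto
    then show ?thesis
      using flippable_iff_local_extremum[OF locally_valid_ascending_assignment is_height_ascending_assignment True]
      by simp
  next
    case False
    then show ?thesis using n unfolding flippable_def faces_def by auto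
  qed
  then have "{\<alpha>. flippable n ?\<mu> \<alpha>} = {(1, 1), (2, n)}" by auto
  then show ?thesis
    using ofg_degree_eq_card_flippable[OF n] locally_valid_ascending_assignment n
    unfolding locally_valid_def by simp
qed

theorem theorem5p8:
  fixes n :: nat
  assumes "n \<ge> 2"
  shows "(\<forall>\<mu>1 \<mu>2. locally_valid n \<mu>1 \<and> locally_valid n \<mu>2 \<longrightarrow>
            (\<exists>\<gamma> \<beta>. proper_3coloring n \<gamma> \<and> proper_3coloring n \<beta> \<and>
                     corresponds n \<gamma> \<mu>1 \<and> corresponds n \<beta> \<mu>2 \<and>
                     (\<exists>H::int. even H \<and>
                        real_of_int (\<Sum>v\<in>dual_vertices n. \<bar>H + rel_height \<gamma> \<beta> v\<bar>) / 2
                          \<le> of_int \<lceil>real (n^2) / 2\<rceil>)))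
       \<and> (\<forall>\<mu>1 \<mu>2. locally_valid n \<mu>1 \<and> locally_valid n \<mu>2 \<longrightarrow>
            (\<exists>k. k \<le> \<lceil>real (n^2) / 2\<rceil> \<and> (ofg_adj n ^^ nat k) \<mu>1 \<mu>2))
       \<and> (\<exists>\<mu>. locally_valid n \<mu> \<and> ofg_degree n \<mu> = 2)
       \<and> (\<forall>\<mu>. locally_valid n \<mu> \<and> ofg_degree n \<mu> = 2 \<longrightarrow>
            locally_valid n (\<lambda>c. - \<mu> c) \<and> ofg_degree n (\<lambda>c. - \<mu> c) = 2 \<and>
            ofg_dist_is n \<mu> (\<lambda>c. - \<mu> c) (nat \<lceil>real (n^2) / 2\<rceil>))"
proof -
  have n: "1 \<le> n" using assms by simp
  have ceil: "\<lceil>real (n^2) / 2\<rceil> = int ((n\<^sup>2 + 1) div 2)" by (rule ceiling_half_square)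
  have "\<exists>k. k \<le> \<lceil>real (n^2) / 2\<rceil> \<and> (ofg_adj n ^^ nat k) \<mu>1 \<mu>2"
    if lv: "locally_valid n \<mu>1" "locally_valid n \<mu>2" for \<mu>1 \<mu>2
  proof -
    obtain N where "N \<le> (n\<^sup>2 + 1) div 2" "(ofg_adj n ^^ N) \<mu>1 \<mu>2"
      using ofg_path_length_le[OF n lv] by blast
    then show ?thesis unfolding ceil by (intro exI[of _ "int N"]) simp
  qed
  then show ?thesis
    using exists_colorings_close[OF n] locally_valid_ascending_assignment ofg_degree_ascending_assignment[OF assms]
      locally_valid_neg ofg_degree_neg[OF assms] ofg_dist_opposite[OF assms]
    unfolding ceil nat_int by (intro conjI allI impI) (simp_all, blast)
qed

end
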